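(* Let $E$ be a semi-Montel or Schwartz space, let $\mathcal{FV}(\Omega)$ be a dom-space and let $U$ fix the topology in $\mathcal{FV}(\Omega)$. Then for every $f\in\mathcal{FV}_{E'}(U,E)_{lb}$ the map $\mathscr{R}_f\colon E'\to\mathcal{FV}(\Omega)$, $\mathscr{R}_f(e'):=f_{e'}$, belongs to $L(E'_\gamma,\mathcal{FV}(\Omega))$, and for every $\alpha\in\mathfrak{A}$ the set $\mathscr{R}_f(B_\alpha^\circ)$ is relatively compact in $\mathcal{FV}(\Omega)$, where $B_\alpha:=\{x\in E:p_\alpha(x)<1\}$.
   Context: $\mathbb{K}\in\{\mathbb{R},\mathbb{C}\}$; $E$ is a non-trivial locally convex Hausdorff space over $\mathbb{K}$ with a directed fundamental system of seminorms $(p_\alpha)_{\alpha\in\mathfrak{A}}$; $E'$ its dual, $B_\alpha^\circ$ the polar of $B_\alpha$ in $E'$, and $E'_\gamma$ is $E'$ with the topology of uniform convergence on precompact subsets of $E$. Semi-Montel: bounded sets are relatively compact; Schwartz space in the usual sense. Weighted function spaces: Let $\Omega,J,L$ be non-empty sets, $(M_l)_{l\in L}$ non-empty sets and $\mathcal{V}=((\nu_{j,l,m})_{m\in M_l})_{j\in J,l\in L}$ functions $\nu_{j,l,m}\colon\Omega\to[0,\infty)$ such that for all $x\in\Omega$, $l\in L$ there is $j\in J$ with $\nu_{j,l,m}(x)>0$ for all $m\in M_l$. Let $\mathcal{M}_{\mathrm{top}}:=\bigcup_lM_l$, and $\mathcal{M}_0,\mathcal{M}_r$ sets, the three pairwise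 disjoint, $\mathcal{M}$ their union; $(\omega_m)_{m\in\mathcal{M}}$ non-empty sets with $\Omega\subset\omega_m$ for $m\in\mathcal{M}_{\mathrm{top}}$; $T^{\mathbb{K}}_m\colon\operatorname{dom}T^{\mathbb{K}}_m\subset\mathbb{K}^\Omega\to\mathbb{K}^{\omega_m}$ linear. $\mathcal{FV}(\Omega)$ is the set of $f\in\bigcap_{m\in\mathcal{M}}\operatorname{dom}T^{\mathbb{K}}_m\cap\bigcap_{m\in\mathcal{M}_0}\ker T^{\mathbb{K}}_m$ with $|f|_{j,l}:=\sup_{x\in\Omega,m\in M_l}|T^{\mathbb{K}}_m(f)(x)|\nu_{j,l,m}(x)<\infty$ for all $j,l$, with these seminorms. $T^{\mathbb{K}}_{m,x}(f):=T^{\mathbb{K}}_m(f)(x)$. It is a dom-space if the seminorms are directed and point evaluations $f\mapsto f(x)$ are continuous. $U\subset\bigcup_{m\in\mathcal{M}}\{m\}\times\omega_m$ fixes the topology in $\mathcal{FV}(\Omega)$ if for all $j\in J$, $l\in L$ there are $i\in J$, $k\in L$, $C>0$ with $|f|_{j,l}\le C\sup\{|T^{\mathbb{K}}_m(f)(x)|\nu_{i,k,m}(x): x\in\Omega,\,m\in M_k,\,(m,x)\in U\}$ for all $f\in\mathcal{FV}(\Omega)$. $\mathcal{FV}_{E'}(U,E)$ is the set of $f\colon U\to E$ such that for each $e'\in E'$ there is a (unique) $f_{e'}\in\mathcal{FV}(\Omega)$ with $T^{\mathbb{K}}_m(f_{e'})(x)=e'(f(m,x))$ for all $(m,x)\in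 U$. For $i\in J$, $k\in L$ let $N_{U,i,k}(f):=\{f(m,x)\nu_{i,k,m}(x): x\in\Omega,\,m\in M_k,\,(m,x)\in U\}$, and $\mathcal{FV}_{E'}(U,E)_{lb}$ is the set of $f\in\mathcal{FV}_{E'}(U,E)$ with $N_{U,i,k}(f)$ bounded in $E$ for all $i\in J$, $k\in L$. *)

theory Defs
  imports "HOL-Analysis.Analysis" "HOL-Library.Function_Algebras"
begin

definition seminorm_on :: "('k::real_normed_field \<Rightarrow> 'e::ab_group_add \<Rightarrow> 'e) \<Rightarrow> ('e \<Rightarrow> real) \<Rightarrow> bool" where
  "seminorm_on smul q \<longleftrightarrow>
     (\<forall>x y. q (x + y) \<le> q x + q y) \<and> (\<forall>c x. q (smul c x) = norm c * q x)"

definition seminorm_topology :: "'i set \<Rightarrow> ('i \<Rightarrow> 'v::ab_group_add \<Rightarrow> real) \<Rightarrow> 'v set \<Rightarrow> 'v topology" where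
  "seminorm_topology I q V = topology (\<lambda>S. S \<subseteq> V \<and>
     (\<forall>x\<in>S. \<exists>F \<epsilon>. finite F \<and> F \<subseteq> I \<and> \<epsilon> > 0 \<and> {y\<in>V. \<forall>i\<in>F. q i (y - x) < \<epsilon>} \<subseteq> S))"

definition lcs_seminorms :: "('k::real_normed_field \<Rightarrow> 'e::ab_group_add \<Rightarrow> 'e) \<Rightarrow> 'a set \<Rightarrow> ('a \<Rightarrow> 'e \<Rightarrow> real) \<Rightarrow> bool" where
  "lcs_seminorms smul A p \<longleftrightarrow> A \<noteq> {} \<and> (\<forall>\<alpha>\<in>A. seminorm_on smul (p \<alpha>)) \<and>
     (\<forall>\<alpha>\<in>A. \<forall>\<beta>\<in>A. \<exists>\<gamma>\<in>A. \<exists>C. \<forall>x. max (p \<alpha> x) (p \<beta> x) \<le> C * p \<gamma> x) \<and>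
     (\<forall>x. x \<noteq> 0 \<longrightarrow> (\<exists>\<alpha>\<in>A. p \<alpha> x \<noteq> 0))"

definition Etop :: "'a set \<Rightarrow> ('a \<Rightarrow> 'e::ab_group_add \<Rightarrow> real) \<Rightarrow> 'e topology" where
  "Etop A p = seminorm_topology A p UNIV"

definition dual :: "('k::real_normed_field \<Rightarrow> 'e::ab_group_add \<Rightarrow> 'e) \<Rightarrow> 'a set \<Rightarrow> ('a \<Rightarrow> 'e \<Rightarrow> real) \<Rightarrow> ('e \<Rightarrow> 'k) set" where
  "dual smul A p = {e'. Vector_Spaces.linear smul (*) e' \<and> continuous_map (Etop A p) euclidean e'}"

definition bounded_lcs :: "'a set \<Rightarrow> ('a \<Rightarrow> 'e \<Rightarrow> real) \<Rightarrow> 'e set \<Rightarrow> bool" where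
  "bounded_lcs A p B \<longleftrightarrow> (\<forall>\<alpha>\<in>A. \<exists>C. \<forall>x\<in>B. p \<alpha> x \<le> C)"

definition precompact_wrt :: "('e::ab_group_add \<Rightarrow> real) \<Rightarrow> 'e set \<Rightarrow> bool" where
  "precompact_wrt q K \<longleftrightarrow> (\<forall>\<epsilon>>0. \<exists>F. finite F \<and> K \<subseteq> (\<Union>y\<in>F. {x. q (x - y) < \<epsilon>}))"

definition precompact_lcs :: "'a set \<Rightarrow> ('a \<Rightarrow> 'e::ab_group_add \<Rightarrow> real) \<Rightarrow> 'e set \<Rightarrow> bool" where
  "precompact_lcs A p K \<longleftrightarrow> (\<forall>\<alpha>\<in>A. precompact_wrt (p \<alpha>) K)"

definition relatively_compact :: "'v topology \<Rightarrow> 'v set \<Rightarrow> bool" where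
  "relatively_compact T S \<longleftrightarrow> compactin T (T closure_of S)"

definition semi_Montel :: "'a set \<Rightarrow> ('a \<Rightarrow> 'e::ab_group_add \<Rightarrow> real) \<Rightarrow> bool" where
  "semi_Montel A p \<longleftrightarrow> (\<forall>B. bounded_lcs A p B \<longrightarrow> relatively_compact (Etop A p) B)"

definition Schwartz :: "'a set \<Rightarrow> ('a \<Rightarrow> 'e::ab_group_add \<Rightarrow> real) \<Rightarrow> bool" where
  "Schwartz A p \<longleftrightarrow> (\<forall>\<alpha>\<in>A. \<exists>\<beta>\<in>A. precompact_wrt (p \<alpha>) {x. p \<beta> x < 1})"

definition gamma_top :: "('k::real_normed_field \<Rightarrow> 'e::ab_group_add \<Rightarrow> 'e) \<Rightarrow> 'a set \<Rightarrow> ('a \<Rightarrow> 'e \<Rightarrow> real) \<Rightarrow> ('e \<Rightarrow> 'k) topology" where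
  "gamma_top smul A p = seminorm_topology {K. K \<noteq> {} \<and> precompact_lcs A p K}
      (\<lambda>K g. Sup ((\<lambda>x. norm (g x)) ` K)) (dual smul A p)"

definition polar_ball :: "('k::real_normed_field \<Rightarrow> 'e::ab_group_add \<Rightarrow> 'e) \<Rightarrow> 'a set \<Rightarrow> ('a \<Rightarrow> 'e \<Rightarrow> real) \<Rightarrow> 'a \<Rightarrow> ('e \<Rightarrow> 'k) set" where
  "polar_ball smul A p \<alpha> = {e' \<in> dual smul A p. \<forall>x. p \<alpha> x < 1 \<longrightarrow> norm (e' x) \<le> 1}"

definition wsup :: "real set \<Rightarrow> real" where
  "wsup S = Sup (insert 0 S)"

text \<open>Functions in K^Omega are represented as functions 'x => 'k vanishing outside Omega;
  functions in K^(omega_m) as functions vanishing outside omega_m. Mtop = (UN l:L. M l).\<close>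
definition FV_data :: "'x set \<Rightarrow> 'j set \<Rightarrow> 'l set \<Rightarrow> ('l \<Rightarrow> 'm set) \<Rightarrow> ('j \<Rightarrow> 'l \<Rightarrow> 'm \<Rightarrow> 'x \<Rightarrow> real)
   \<Rightarrow> 'm set \<Rightarrow> 'm set \<Rightarrow> ('m \<Rightarrow> 'x set) \<Rightarrow> ('m \<Rightarrow> ('x \<Rightarrow> 'k::real_normed_field) set)
   \<Rightarrow> ('m \<Rightarrow> ('x \<Rightarrow> 'k) \<Rightarrow> 'x \<Rightarrow> 'k) \<Rightarrow> bool" where
  "FV_data \<Omega> J L M \<nu> M0 Mr \<omega> domT T \<longleftrightarrow>
     \<Omega> \<noteq> {} \<and> J \<noteq> {} \<and> L \<noteq> {} \<and> (\<forall>l\<in>L. M l \<noteq> {}) \<and>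
     (\<forall>j\<in>J. \<forall>l\<in>L. \<forall>m\<in>M l. \<forall>x\<in>\<Omega>. \<nu> j l m x \<ge> 0) \<and>
     (\<forall>x\<in>\<Omega>. \<forall>l\<in>L. \<exists>j\<in>J. \<forall>m\<in>M l. \<nu> j l m x > 0) \<and>
     (\<Union>l\<in>L. M l) \<inter> M0 = {} \<and> (\<Union>l\<in>L. M l) \<inter> Mr = {} \<and> M0 \<inter> Mr = {} \<and>
     (\<forall>m\<in>(\<Union>l\<in>L. M l) \<union> M0 \<union> Mr. \<omega> m \<noteq> {}) \<and>
     (\<forall>m\<in>(\<Union>l\<in>L. M l). \<Omega> \<subseteq> \<omega> m) \<and>
     (\<forall>m\<in>(\<Union>l\<in>L. M l) \<union> M0 \<union> Mr.
        domT m \<subseteq> {f. \<forall>x. x \<notin> \<Omega> \<longrightarrow> f x = 0} \<and>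
        (\<lambda>x. 0) \<in> domT m \<and>
        (\<forall>f\<in>domT m. \<forall>g\<in>domT m. (\<lambda>x. f x + g x) \<in> domT m \<and>
            T m (\<lambda>x. f x + g x) = (\<lambda>x. T m f x + T m g x)) \<and>
        (\<forall>f\<in>domT m. \<forall>c. (\<lambda>x. c * f x) \<in> domT m \<and> T m (\<lambda>x. c * f x) = (\<lambda>x. c * T m f x)) \<and>
        (\<forall>f\<in>domT m. \<forall>x. x \<notin> \<omega> m \<longrightarrow> T m f x = 0))"

definition FVsn :: "'x set \<Rightarrow> ('l \<Rightarrow> 'm set) \<Rightarrow> ('j \<Rightarrow> 'l \<Rightarrow> 'm \<Rightarrow> 'x \<Rightarrow> real)
   \<Rightarrow> ('m \<Rightarrow> ('x \<Rightarrow> 'k::real_normed_field) \<Rightarrow> 'x \<Rightarrow> 'k) \<Rightarrow> 'j \<Rightarrow> 'l \<Rightarrow> ('x \<Rightarrow> 'k) \<Rightarrow> real" where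
  "FVsn \<Omega> M \<nu> T j l f = wsup {norm (T m f x) * \<nu> j l m x | x m. x \<in> \<Omega> \<and> m \<in> M l}"

definition FVspace :: "'x set \<Rightarrow> 'j set \<Rightarrow> 'l set \<Rightarrow> ('l \<Rightarrow> 'm set) \<Rightarrow> ('j \<Rightarrow> 'l \<Rightarrow> 'm \<Rightarrow> 'x \<Rightarrow> real)
   \<Rightarrow> 'm set \<Rightarrow> 'm set \<Rightarrow> ('m \<Rightarrow> 'x set) \<Rightarrow> ('m \<Rightarrow> ('x \<Rightarrow> 'k::real_normed_field) set)
   \<Rightarrow> ('m \<Rightarrow> ('x \<Rightarrow> 'k) \<Rightarrow> 'x \<Rightarrow> 'k) \<Rightarrow> ('x \<Rightarrow> 'k) set" where
  "FVspace \<Omega> J L M \<nu> M0 Mr \<omega> domT T = {f.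
     (\<forall>m\<in>(\<Union>l\<in>L. M l) \<union> M0 \<union> Mr. f \<in> domT m) \<and>
     (\<forall>m\<in>M0. \<forall>x\<in>\<omega> m. T m f x = 0) \<and>
     (\<forall>j\<in>J. \<forall>l\<in>L. bdd_above {norm (T m f x) * \<nu> j l m x | x m. x \<in> \<Omega> \<and> m \<in> M l})}"

definition FVtop :: "'x set \<Rightarrow> 'j set \<Rightarrow> 'l set \<Rightarrow> ('l \<Rightarrow> 'm set) \<Rightarrow> ('j \<Rightarrow> 'l \<Rightarrow> 'm \<Rightarrow> 'x \<Rightarrow> real)
   \<Rightarrow> 'm set \<Rightarrow> 'm set \<Rightarrow> ('m \<Rightarrow> 'x set) \<Rightarrow> ('m \<Rightarrow> ('x \<Rightarrow> 'k::real_normed_field) set)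
   \<Rightarrow> ('m \<Rightarrow> ('x \<Rightarrow> 'k) \<Rightarrow> 'x \<Rightarrow> 'k) \<Rightarrow> ('x \<Rightarrow> 'k) topology" where
  "FVtop \<Omega> J L M \<nu> M0 Mr \<omega> domT T =
     seminorm_topology (J \<times> L) (\<lambda>(j, l). FVsn \<Omega> M \<nu> T j l) (FVspace \<Omega> J L M \<nu> M0 Mr \<omega> domT T)"

definition dom_space :: "'x set \<Rightarrow> 'j set \<Rightarrow> 'l set \<Rightarrow> ('l \<Rightarrow> 'm set) \<Rightarrow> ('j \<Rightarrow> 'l \<Rightarrow> 'm \<Rightarrow> 'x \<Rightarrow> real)
   \<Rightarrow> 'm set \<Rightarrow> 'm set \<Rightarrow> ('m \<Rightarrow> 'x set) \<Rightarrow> ('m \<Rightarrow> ('x \<Rightarrow> 'k::real_normed_field) set)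
   \<Rightarrow> ('m \<Rightarrow> ('x \<Rightarrow> 'k) \<Rightarrow> 'x \<Rightarrow> 'k) \<Rightarrow> bool" where
  "dom_space \<Omega> J L M \<nu> M0 Mr \<omega> domT T \<longleftrightarrow>
     (\<forall>j1\<in>J. \<forall>l1\<in>L. \<forall>j2\<in>J. \<forall>l2\<in>L. \<exists>j3\<in>J. \<exists>l3\<in>L. \<exists>C.
        \<forall>f\<in>FVspace \<Omega> J L M \<nu> M0 Mr \<omega> domT T.
          max (FVsn \<Omega> M \<nu> T j1 l1 f) (FVsn \<Omega> M \<nu> T j2 l2 f) \<le> C * FVsn \<Omega> M \<nu> T j3 l3 f) \<and>
     (\<forall>x\<in>\<Omega>. continuous_map (FVtop \<Omega> J L M \<nu> M0 Mr \<omega> domT T) euclidean (\<lambda>f. f x))"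

definition fixes_topology :: "'x set \<Rightarrow> 'j set \<Rightarrow> 'l set \<Rightarrow> ('l \<Rightarrow> 'm set) \<Rightarrow> ('j \<Rightarrow> 'l \<Rightarrow> 'm \<Rightarrow> 'x \<Rightarrow> real)
   \<Rightarrow> 'm set \<Rightarrow> 'm set \<Rightarrow> ('m \<Rightarrow> 'x set) \<Rightarrow> ('m \<Rightarrow> ('x \<Rightarrow> 'k::real_normed_field) set)
   \<Rightarrow> ('m \<Rightarrow> ('x \<Rightarrow> 'k) \<Rightarrow> 'x \<Rightarrow> 'k) \<Rightarrow> ('m \<times> 'x) set \<Rightarrow> bool" where
  "fixes_topology \<Omega> J L M \<nu> M0 Mr \<omega> domT T U \<longleftrightarrow>
     U \<subseteq> {(m, x). m \<in> (\<Union>l\<in>L. M l) \<union> M0 \<union> Mr \<and> x \<in> \<omega> m} \<and>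
     (\<forall>j\<in>J. \<forall>l\<in>L. \<exists>i\<in>J. \<exists>k\<in>L. \<exists>C>0. \<forall>f\<in>FVspace \<Omega> J L M \<nu> M0 Mr \<omega> domT T.
        FVsn \<Omega> M \<nu> T j l f \<le>
          C * wsup {norm (T m f x) * \<nu> i k m x | x m. x \<in> \<Omega> \<and> m \<in> M k \<and> (m, x) \<in> U})"

definition FVE_lb :: "('k::real_normed_field \<Rightarrow> 'e::ab_group_add \<Rightarrow> 'e) \<Rightarrow> 'a set \<Rightarrow> ('a \<Rightarrow> 'e \<Rightarrow> real)
   \<Rightarrow> 'x set \<Rightarrow> 'j set \<Rightarrow> 'l set \<Rightarrow> ('l \<Rightarrow> 'm set) \<Rightarrow> ('j \<Rightarrow> 'l \<Rightarrow> 'm \<Rightarrow> 'x \<Rightarrow> real)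
   \<Rightarrow> 'm set \<Rightarrow> 'm set \<Rightarrow> ('m \<Rightarrow> 'x set) \<Rightarrow> ('m \<Rightarrow> ('x \<Rightarrow> 'k) set)
   \<Rightarrow> ('m \<Rightarrow> ('x \<Rightarrow> 'k) \<Rightarrow> 'x \<Rightarrow> 'k) \<Rightarrow> ('m \<times> 'x) set \<Rightarrow> ('m \<times> 'x \<Rightarrow> 'e) set" where
  "FVE_lb smul A p \<Omega> J L M \<nu> M0 Mr \<omega> domT T U = {f.
     (\<forall>e'\<in>dual smul A p. \<exists>g\<in>FVspace \<Omega> J L M \<nu> M0 Mr \<omega> domT T.
         \<forall>(m, x)\<in>U. T m g x = e' (f (m, x))) \<and>
     (\<forall>i\<in>J. \<forall>k\<in>L. bounded_lcs A p
         {smul (of_real (\<nu> i k m x)) (f (m, x)) | x m. x \<in> \<Omega> \<and> m \<in> M k \<and> (m, x) \<in> U})}"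

definition Rmap :: "'x set \<Rightarrow> 'j set \<Rightarrow> 'l set \<Rightarrow> ('l \<Rightarrow> 'm set) \<Rightarrow> ('j \<Rightarrow> 'l \<Rightarrow> 'm \<Rightarrow> 'x \<Rightarrow> real)
   \<Rightarrow> 'm set \<Rightarrow> 'm set \<Rightarrow> ('m \<Rightarrow> 'x set) \<Rightarrow> ('m \<Rightarrow> ('x \<Rightarrow> 'k::real_normed_field) set)
   \<Rightarrow> ('m \<Rightarrow> ('x \<Rightarrow> 'k) \<Rightarrow> 'x \<Rightarrow> 'k) \<Rightarrow> ('m \<times> 'x) set \<Rightarrow> ('m \<times> 'x \<Rightarrow> 'e) \<Rightarrow> ('e \<Rightarrow> 'k) \<Rightarrow> ('x \<Rightarrow> 'k)" where
  "Rmap \<Omega> J L M \<nu> M0 Mr \<omega> domT T U f e' =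
     (THE g. g \<in> FVspace \<Omega> J L M \<nu> M0 Mr \<omega> domT T \<and> (\<forall>(m, x)\<in>U. T m g x = e' (f (m, x))))"

end

theory Submission
  imports Defs
begin

text \<open>
  For \<open>e' \<in> E'\<close> the weighted values of \<open>R_f e'\<close> on \<open>U\<close> are the values of \<open>e'\<close> on the
  sets \<open>N_U i k\<close> of weighted values of \<open>f\<close>; these are bounded, hence precompact as \<open>E\<close> is
  semi-Montel or Schwartz. Since \<open>U\<close> fixes the topology, each seminorm of \<open>R_f e'\<close> is bounded
  by a multiple of \<open>sup {|e' z| : z \<in> N_U i k}\<close>, so \<open>R_f\<close> is continuous for uniform
  convergence on precompact sets. On the equicontinuous polar of \<open>B_\<alpha>\<close> this agrees with
  pointwise convergence, for which the polar is compact (Alaoglu--Bourbaki); so its image is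
  compact, and closed in the Hausdorff space \<open>FV(\<Omega>)\<close>. Linearity of \<open>R_f\<close> comes from the
  uniqueness of \<open>f_e'\<close>, which holds because point evaluations are continuous.
\<close>

section \<open>Topologies defined by families of seminorms\<close>

definition seminorm_open :: "'i set \<Rightarrow> ('i \<Rightarrow> 'v::ab_group_add \<Rightarrow> real) \<Rightarrow> 'v set \<Rightarrow> 'v set \<Rightarrow> bool" where
  "seminorm_open I q V S \<longleftrightarrow> S \<subseteq> V \<and>
     (\<forall>x\<in>S. \<exists>F \<epsilon>. finite F \<and> F \<subseteq> I \<and> \<epsilon> > 0 \<and> {y\<in>V. \<forall>i\<in>F. q i (y - x) < \<epsilon>} \<subseteq> S)"

lemma istopology_seminorm_open: "istopology (seminorm_open I q V)"
  unfolding istopology_def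
proof (intro conjI allI impI)
  fix S T assume "seminorm_open I q V S" "seminorm_open I q V T"
  show "seminorm_open I q V (S \<inter> T)"
    unfolding seminorm_open_def
  proof (intro conjI ballI)
    show "S \<inter> T \<subseteq> V" using \<open>seminorm_open I q V S\<close> unfolding seminorm_open_def by auto
    fix x assume "x \<in> S \<inter> T"
    then obtain F1 \<epsilon>1 F2 \<epsilon>2 where
      "finite F1" "F1 \<subseteq> I" "\<epsilon>1 > 0" "{y\<in>V. \<forall>i\<in>F1. q i (y - x) < \<epsilon>1} \<subseteq> S"
      "finite F2" "F2 \<subseteq> I" "\<epsilon>2 > 0" "{y\<in>V. \<forall>i\<in>F2. q i (y - x) < \<epsilon>2} \<subseteq> T"
      using \<open>seminorm_open I q V S\<close> \<open>seminorm_open I q V T\<close> unfolding seminorm_open_def by blast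
    then show "\<exists>F \<epsilon>. finite F \<and> F \<subseteq> I \<and> \<epsilon> > 0 \<and> {y\<in>V. \<forall>i\<in>F. q i (y - x) < \<epsilon>} \<subseteq> S \<inter> T"
      by (intro exI[of _ "F1 \<union> F2"] exI[of _ "min \<epsilon>1 \<epsilon>2"]) auto
  qed
next
  fix \<K> assume \<K>: "\<forall>S\<in>\<K>. seminorm_open I q V S"
  show "seminorm_open I q V (\<Union>\<K>)"
    unfolding seminorm_open_def
  proof (intro conjI ballI)
    show "\<Union>\<K> \<subseteq> V" using \<K> unfolding seminorm_open_def by blast
    fix x assume "x \<in> \<Union>\<K>"
    then obtain S where "S \<in> \<K>" "x \<in> S" by blast
    then have "seminorm_open I q V S" using \<K> by blast
    then obtain F \<epsilon> where "finite F" "F \<subseteq> I" "\<epsilon> > 0" "{y\<in>V. \<forall>i\<in>F. q i (y - x) < \<epsilon>} \<subseteq> S"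
      using \<open>x \<in> S\<close> unfolding seminorm_open_def by blast
    then show "\<exists>F \<epsilon>. finite F \<and> F \<subseteq> I \<and> \<epsilon> > 0 \<and> {y\<in>V. \<forall>i\<in>F. q i (y - x) < \<epsilon>} \<subseteq> \<Union>\<K>"
      using \<open>S \<in> \<K>\<close> by blast
  qed
qed

lemma openin_seminorm_topology:
  "openin (seminorm_topology I q V) S \<longleftrightarrow> S \<subseteq> V \<and>
     (\<forall>x\<in>S. \<exists>F \<epsilon>. finite F \<and> F \<subseteq> I \<and> \<epsilon> > 0 \<and> {y\<in>V. \<forall>i\<in>F. q i (y - x) < \<epsilon>} \<subseteq> S)"
proof -
  have "seminorm_topology I q V = topology (seminorm_open I q V)"
    unfolding seminorm_topology_def seminorm_open_def ..
  then have "openin (seminorm_topology I q V) = seminorm_open I q V"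
    using topology_inverse'[OF istopology_seminorm_open] by simp
  then show ?thesis unfolding seminorm_open_def by simp
qed

lemma topspace_seminorm_topology [simp]: "topspace (seminorm_topology I q V) = V"
proof -
  have "openin (seminorm_topology I q V) V"
    unfolding openin_seminorm_topology by (intro conjI ballI exI[of _ "{}"] exI[of _ "1::real"]) auto
  then have "V \<subseteq> topspace (seminorm_topology I q V)" by (rule openin_subset)
  moreover have "topspace (seminorm_topology I q V) \<subseteq> V"
    using openin_topspace[of "seminorm_topology I q V"] unfolding openin_seminorm_topology by blast
  ultimately show ?thesis by blast
qed

lemma openin_seminorm_ball:
  assumes triangle: "\<And>a b c. a \<in> V \<Longrightarrow> b \<in> V \<Longrightarrow> c \<in> V \<Longrightarrow> q i (a - c) \<le> q i (a - b) + q i (b - c)"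
    and "i \<in> I" "x \<in> V"
  shows "openin (seminorm_topology I q V) {y\<in>V. q i (y - x) < \<epsilon>}"
  unfolding openin_seminorm_topology
proof (intro conjI ballI)
  fix y assume y: "y \<in> {y\<in>V. q i (y - x) < \<epsilon>}"
  have "{z\<in>V. \<forall>j\<in>{i}. q j (z - y) < \<epsilon> - q i (y - x)} \<subseteq> {y\<in>V. q i (y - x) < \<epsilon>}"
  proof safe
    fix z assume "z \<in> V" "\<forall>j\<in>{i}. q j (z - y) < \<epsilon> - q i (y - x)"
    then show "q i (z - x) < \<epsilon>" using triangle[of z y x] y \<open>x \<in> V\<close> by simp
  qed
  then show "\<exists>F \<delta>. finite F \<and> F \<subseteq> I \<and> \<delta> > 0 \<and> {z\<in>V. \<forall>j\<in>F. q j (z - y) < \<delta>} \<subseteq> {y\<in>V. q i (y - x) < \<epsilon>}"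
    using y \<open>i \<in> I\<close> by (intro exI[of _ "{i}"] exI[of _ "\<epsilon> - q i (y - x)"]) auto
qed auto

lemma continuous_map_into_seminorm_topology:
  assumes "f ` topspace X \<subseteq> V"
    and "\<And>x0 i \<epsilon>. x0 \<in> topspace X \<Longrightarrow> i \<in> I \<Longrightarrow> \<epsilon> > 0 \<Longrightarrow>
           \<exists>W. openin X W \<and> x0 \<in> W \<and> (\<forall>x\<in>W. q i (f x - f x0) < \<epsilon>)"
  shows "continuous_map X (seminorm_topology I q V) f"
  unfolding continuous_map_def
proof (intro conjI allI impI)
  show "f \<in> topspace X \<rightarrow> topspace (seminorm_topology I q V)" using assms(1) by auto
  fix S assume S: "openin (seminorm_topology I q V) S"
  show "openin X {x \<in> topspace X. f x \<in> S}"
    unfolding openin_subopen[of X "{x \<in> topspace X. f x \<in> S}"]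
  proof
    fix x0 assume x0: "x0 \<in> {x \<in> topspace X. f x \<in> S}"
    then obtain F \<epsilon> where F: "finite F" "F \<subseteq> I" "\<epsilon> > 0" "{y\<in>V. \<forall>i\<in>F. q i (y - f x0) < \<epsilon>} \<subseteq> S"
      using S unfolding openin_seminorm_topology by blast
    have "\<forall>i\<in>F. \<exists>W. openin X W \<and> x0 \<in> W \<and> (\<forall>x\<in>W. q i (f x - f x0) < \<epsilon>)"
      using assms(2) x0 F by blast
    then obtain W where W: "\<And>i. i \<in> F \<Longrightarrow> openin X (W i) \<and> x0 \<in> W i \<and> (\<forall>x\<in>W i. q i (f x - f x0) < \<epsilon>)"
      by metis
    have "openin X ((\<Inter>i\<in>F. W i) \<inter> topspace X)" using F(1) W by blast
    moreover have "(\<Inter>i\<in>F. W i) \<inter> topspace X \<subseteq> {x \<in> topspace X. f x \<in> S}"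
      using W F(4) assms(1) by fastforce
    ultimately show "\<exists>T. openin X T \<and> x0 \<in> T \<and> T \<subseteq> {x \<in> topspace X. f x \<in> S}"
      using W x0 by blast
  qed
qed

lemma eq_if_seminorms_vanish:
  assumes "t1_space (seminorm_topology I q V)" "x \<in> V" "y \<in> V" "\<And>i. i \<in> I \<Longrightarrow> q i (x - y) \<le> 0"
  shows "x = y"
proof (rule ccontr)
  assume "x \<noteq> y"
  then obtain W where "openin (seminorm_topology I q V) W" "y \<in> W" "x \<notin> W"
    using assms(1-3) unfolding t1_space_def by force
  then obtain F \<epsilon> where "F \<subseteq> I" "\<epsilon> > 0" "{z\<in>V. \<forall>i\<in>F. q i (z - y) < \<epsilon>} \<subseteq> W"
    unfolding openin_seminorm_topology by blast
  then show False using assms(2,4) \<open>x \<notin> W\<close> by fastforce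
qed

section \<open>Real normed spaces with totally bounded balls\<close>

lemma Cauchy_if_dominated:
  fixes u :: "nat \<Rightarrow> 'a::real_normed_vector" and z :: "nat \<Rightarrow> 'b::real_normed_vector"
  assumes "Cauchy z" and dom: "\<And>m n. norm (u m - u n) \<le> C * norm (z m - z n)"
  shows "Cauchy u"
proof (rule CauchyI)
  fix e :: real assume "e > 0"
  then obtain N where N: "\<And>m n. m \<ge> N \<Longrightarrow> n \<ge> N \<Longrightarrow> norm (z m - z n) < e / (\<bar>C\<bar> + 1)"
    using CauchyD[OF \<open>Cauchy z\<close>, of "e / (\<bar>C\<bar> + 1)"] by auto
  have "norm (u m - u n) < e" if "m \<ge> N" "n \<ge> N" for m n
  proof -
    have "norm (u m - u n) \<le> (\<bar>C\<bar> + 1) * norm (z m - z n)"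
      using dom[of m n] by (smt (verit) mult_right_mono norm_ge_zero)
    also have "\<dots> < (\<bar>C\<bar> + 1) * (e / (\<bar>C\<bar> + 1))"
      using N[OF that] by (intro mult_strict_left_mono) auto
    finally show ?thesis by simp
  qed
  then show "\<exists>M. \<forall>m\<ge>M. \<forall>n\<ge>M. norm (u m - u n) < e" by blast
qed

lemma infdist_span_scaleR_le:
  fixes b s :: "'a::real_normed_vector"
  assumes "s \<in> span Y"
  shows "\<bar>t\<bar> * infdist b (span Y) \<le> norm (t *\<^sub>R b + s)"
proof (cases "t = 0")
  case False
  have "- ((1/t) *\<^sub>R s) \<in> span Y" using assms by (simp add: span_neg span_scale)
  then have "infdist b (span Y) \<le> norm (b + (1/t) *\<^sub>R s)"
    using infdist_le by (fastforce simp: dist_norm)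
  then have "\<bar>t\<bar> * infdist b (span Y) \<le> norm (t *\<^sub>R (b + (1/t) *\<^sub>R s))"
    by (simp add: mult_left_mono)
  also have "t *\<^sub>R (b + (1/t) *\<^sub>R s) = t *\<^sub>R b + s" using False by (simp add: algebra_simps)
  finally show ?thesis .
qed simp

lemma complete_span_insert:
  fixes b :: "'a::real_normed_vector"
  assumes "complete (span Y)"
  shows "complete (span (insert b Y))"
proof (cases "b \<in> span Y")
  case True
  then show ?thesis using assms by (simp add: span_redundant)
next
  case False
  define d where "d = infdist b (span Y)"
  have "d > 0" unfolding d_def
    using infdist_pos_not_in_closed[OF complete_imp_closed[OF assms]] False span_zero by blast
  show ?thesis
  proof (rule completeI)
    fix z assume z: "\<forall>n. z n \<in> span (insert b Y)" "Cauchy z"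
    have "\<forall>n. \<exists>k. z n - k *\<^sub>R b \<in> span Y" using z(1) by (simp add: span_breakdown_eq)
    then obtain t where t: "\<And>n. z n - t n *\<^sub>R b \<in> span Y" by metis
    define s where "s n = z n - t n *\<^sub>R b" for n
    have s: "s n \<in> span Y" for n using t by (simp add: s_def)
    have z_eq: "z n = t n *\<^sub>R b + s n" for n by (simp add: s_def)
    have t_le: "\<bar>t m - t n\<bar> * d \<le> norm (z m - z n)" for m n
    proof -
      have "z m - z n = (t m - t n) *\<^sub>R b + (s m - s n)" by (simp add: z_eq algebra_simps)
      then show ?thesis unfolding d_def using infdist_span_scaleR_le[OF span_diff[OF s s]] by metis
    qed
    have "Cauchy t"
    proof (rule Cauchy_if_dominated[OF \<open>Cauchy z\<close>])
      show "norm (t m - t n) \<le> 1 / d * norm (z m - z n)" for m n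
        using t_le[of m n] \<open>d > 0\<close> by (simp add: field_simps)
    qed
    have "Cauchy s"
    proof (rule Cauchy_if_dominated[OF \<open>Cauchy z\<close>])
      fix m n
      have "s m - s n = (z m - z n) - (t m - t n) *\<^sub>R b" by (simp add: z_eq algebra_simps)
      then have "norm (s m - s n) \<le> norm (z m - z n) + \<bar>t m - t n\<bar> * norm b"
        by (metis norm_scaleR norm_triangle_ineq4)
      also have "\<bar>t m - t n\<bar> * norm b \<le> norm b / d * norm (z m - z n)"
        using mult_left_mono[OF t_le[of m n], of "norm b"] \<open>d > 0\<close> by (simp add: field_simps)
      finally show "norm (s m - s n) \<le> (1 + norm b / d) * norm (z m - z n)"
        by (simp add: algebra_simps)
    qed
    obtain T where "t \<longlonglongrightarrow> T" using \<open>Cauchy t\<close> Cauchy_convergent_iff convergent_def by blast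
    moreover obtain \<sigma> where "\<sigma> \<in> span Y" "s \<longlonglongrightarrow> \<sigma>" using assms s \<open>Cauchy s\<close> completeE by metis
    ultimately have "z \<longlonglongrightarrow> T *\<^sub>R b + \<sigma>" unfolding z_eq[abs_def] by (intro tendsto_intros)
    moreover have "T *\<^sub>R b + \<sigma> \<in> span (insert b Y)"
      using \<open>\<sigma> \<in> span Y\<close> by (simp add: span_breakdown_eq exI[of _ T])
    ultimately show "\<exists>l\<in>span (insert b Y). z \<longlonglongrightarrow> l" by blast
  qed
qed

lemma complete_span_finite:
  fixes Y :: "'a::real_normed_vector set"
  assumes "finite Y"
  shows "complete (span Y)"
  using assms by (induction Y rule: finite_induct) (auto simp: compact_imp_complete complete_span_insert)

text \<open>Riesz's argument: if \<open>x\<close> has distance \<open>d > 0\<close> from the closed span, pick \<open>s\<close> in it with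
  \<open>norm (x - s) < 2 * d\<close>; a net point within \<open>1/2\<close> of the normalised \<open>x - s\<close> then gives a point
  of the span closer than \<open>d\<close> to \<open>x\<close>.\<close>
lemma span_half_net_eq_UNIV:
  fixes Y :: "'a::real_normed_vector set"
  assumes "finite Y" and net: "cball 0 1 \<subseteq> (\<Union>c\<in>Y. ball c (1/2))"
  shows "span Y = UNIV"
proof (rule ccontr)
  assume "span Y \<noteq> UNIV"
  then obtain x where x: "x \<notin> span Y" by blast
  define d where "d = infdist x (span Y)"
  have "d > 0" unfolding d_def
    using infdist_pos_not_in_closed[OF complete_imp_closed[OF complete_span_finite[OF \<open>finite Y\<close>]] _ x]
      span_zero by blast
  have "infdist x (span Y) < 2 * d" using \<open>d > 0\<close> by (simp add: d_def)
  then obtain s where s: "s \<in> span Y" "dist x s < 2 * d"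
    using span_zero by (metis infdist_def cINF_less_iff bdd_belowI2 zero_le_dist empty_iff)
  define n where "n = norm (x - s)"
  have "n > 0" unfolding n_def using x s by auto
  define w where "w = (1/n) *\<^sub>R (x - s)"
  have "norm w = 1" using \<open>n > 0\<close> by (simp add: w_def n_def)
  then have "w \<in> (\<Union>c\<in>Y. ball c (1/2))" using net by (intro subsetD[OF net]) simp
  then obtain y where y: "y \<in> Y" "dist y w < 1/2" by auto
  have "x - (s + n *\<^sub>R y) = n *\<^sub>R (w - y)" using \<open>n > 0\<close> by (simp add: w_def algebra_simps)
  then have dist_eq: "dist x (s + n *\<^sub>R y) = n * dist y w"
    using \<open>n > 0\<close> by (simp add: dist_norm norm_minus_commute)
  have "s + n *\<^sub>R y \<in> span Y" using s y by (simp add: span_add span_scale span_base)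
  then have "d \<le> dist x (s + n *\<^sub>R y)" unfolding d_def by (rule infdist_le)
  also have "\<dots> = n * dist y w" by (rule dist_eq)
  also have "\<dots> < n / 2" using y \<open>n > 0\<close> by simp
  also have "\<dots> < d" using s by (simp add: n_def dist_norm)
  finally show False .
qed

lemma compact_cball_if_totally_bounded_balls:
  fixes r :: real
  assumes tb: "\<And>r \<epsilon>. \<epsilon> > 0 \<Longrightarrow> \<exists>F. finite F \<and> cball (0::'a::real_normed_vector) r \<subseteq> (\<Union>c\<in>F. ball c \<epsilon>)"
  shows "compact (cball (0::'a) r)"
proof -
  obtain Y where "finite Y" "cball (0::'a) 1 \<subseteq> (\<Union>c\<in>Y. ball c (1/2))"
    using tb[of "1/2" 1] by auto
  then have "complete (UNIV :: 'a set)"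
    using complete_span_finite span_half_net_eq_UNIV by metis
  then have "complete (cball (0::'a) r)" by (intro complete_closed_subset[OF closed_cball]) auto
  then show ?thesis unfolding compact_eq_totally_bounded using tb by blast
qed

section \<open>Locally convex spaces and their duals\<close>

lemma module_mult_field: "module ((*) :: 'k::field \<Rightarrow> 'k \<Rightarrow> 'k)"
  by standard (simp_all add: algebra_simps)

definition sup_norm_on :: "'e set \<Rightarrow> ('e \<Rightarrow> 'k::real_normed_field) \<Rightarrow> real" where
  "sup_norm_on K g = Sup ((\<lambda>x. norm (g x)) ` K)"

lemma gamma_top_eq:
  "gamma_top smul A p = seminorm_topology {K. K \<noteq> {} \<and> precompact_lcs A p K} sup_norm_on (dual smul A p)"
  unfolding gamma_top_def sup_norm_on_def[abs_def] ..

lemma topspace_Etop [simp]: "topspace (Etop A p) = UNIV"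
  by (simp add: Etop_def)

locale lc_space = vector_space smul
  for smul :: "'k::real_normed_field \<Rightarrow> 'e::ab_group_add \<Rightarrow> 'e" +
  fixes A :: "'a set" and p :: "'a \<Rightarrow> 'e \<Rightarrow> real"
  assumes seminorms: "lcs_seminorms smul A p"
begin

lemma seminorm_add: "\<alpha> \<in> A \<Longrightarrow> p \<alpha> (x + y) \<le> p \<alpha> x + p \<alpha> y"
  using seminorms unfolding lcs_seminorms_def seminorm_on_def by auto

lemma seminorm_scale: "\<alpha> \<in> A \<Longrightarrow> p \<alpha> (smul c x) = norm c * p \<alpha> x"
  using seminorms unfolding lcs_seminorms_def seminorm_on_def by auto

lemma seminorm_zero: "\<alpha> \<in> A \<Longrightarrow> p \<alpha> 0 = 0"
  using seminorm_scale[of \<alpha> 0 0] by simp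

lemma seminorm_minus: "\<alpha> \<in> A \<Longrightarrow> p \<alpha> (- x) = p \<alpha> x"
  using seminorm_scale[of \<alpha> "-1" x] by (simp add: scale_minus_left)

lemma seminorm_nonneg: "\<alpha> \<in> A \<Longrightarrow> 0 \<le> p \<alpha> x"
  using seminorm_add[of \<alpha> x "-x"] seminorm_minus[of \<alpha> x] seminorm_zero[of \<alpha>] by simp

lemma seminorm_diff_triangle: "\<alpha> \<in> A \<Longrightarrow> p \<alpha> (a - c) \<le> p \<alpha> (a - b) + p \<alpha> (b - c)"
  using seminorm_add[of \<alpha> "a - b" "b - c"] by simp

lemma seminorm_diff_commute: "\<alpha> \<in> A \<Longrightarrow> p \<alpha> (a - b) = p \<alpha> (b - a)"
  using seminorm_minus[of \<alpha> "a - b"] by simp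

lemma seminorm_scale_diff: "\<alpha> \<in> A \<Longrightarrow> p \<alpha> (smul c x - smul d x) = norm (c - d) * p \<alpha> x"
  by (simp add: seminorm_scale scale_left_diff_distrib[symmetric])

lemma openin_Etop_ball: "\<alpha> \<in> A \<Longrightarrow> openin (Etop A p) {y. p \<alpha> (y - x) < \<epsilon>}"
  using openin_seminorm_ball[of UNIV p \<alpha> A x \<epsilon>] seminorm_diff_triangle unfolding Etop_def by auto

lemma dual_module_hom: "e \<in> dual smul A p \<Longrightarrow> module_hom smul (*) e"
  unfolding dual_def by (auto simp: module_hom_iff_linear)

lemma dual_add: "e \<in> dual smul A p \<Longrightarrow> e (x + y) = e x + e y"
  using dual_module_hom module_hom.add by blast

lemma dual_scale: "e \<in> dual smul A p \<Longrightarrow> e (smul c x) = c * e x"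
  using dual_module_hom module_hom.scale by blast

lemma dual_zero: "e \<in> dual smul A p \<Longrightarrow> e 0 = 0"
  using dual_module_hom module_hom.zero by blast

lemma dual_diff: "e \<in> dual smul A p \<Longrightarrow> e (x - y) = e x - e y"
  using dual_module_hom module_hom.diff by blast

lemma precompact_wrt_imp_bounded:
  assumes "precompact_wrt (p \<alpha>) K" "\<alpha> \<in> A"
  shows "\<exists>B. \<forall>x\<in>K. p \<alpha> x \<le> B"
proof -
  obtain F where F: "finite F" "K \<subseteq> (\<Union>y\<in>F. {x. p \<alpha> (x - y) < 1})"
    using assms unfolding precompact_wrt_def by (meson zero_less_one)
  have "p \<alpha> x \<le> 1 + (\<Sum>y\<in>F. p \<alpha> y)" if "x \<in> K" for x
  proof -
    obtain y where y: "y \<in> F" "p \<alpha> (x - y) < 1" using F(2) \<open>x \<in> K\<close> by blast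
    have "p \<alpha> x \<le> p \<alpha> (x - y) + p \<alpha> y" using seminorm_add[of \<alpha> "x - y" y] assms by simp
    also have "p \<alpha> y \<le> (\<Sum>y\<in>F. p \<alpha> y)"
      using y F assms by (intro member_le_sum) (auto simp: seminorm_nonneg)
    finally show ?thesis using y by simp
  qed
  then show ?thesis by blast
qed

lemma precompact_bounded_finite_seminorms:
  assumes "precompact_lcs A p K" "finite F" "F \<subseteq> A"
  shows "\<exists>B. \<forall>i\<in>F. \<forall>x\<in>K. p i x \<le> B"
proof -
  have "\<forall>i\<in>F. \<exists>B. \<forall>x\<in>K. p i x \<le> B"
    using assms precompact_wrt_imp_bounded unfolding precompact_lcs_def by blast
  then obtain B where B: "\<And>i x. i \<in> F \<Longrightarrow> x \<in> K \<Longrightarrow> p i x \<le> B i" by metis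
  have "\<bar>B i\<bar> \<le> (\<Sum>i\<in>F. \<bar>B i\<bar>)" if "i \<in> F" for i
    using assms(2) that by (intro member_le_sum) auto
  then have "\<forall>i\<in>F. \<forall>x\<in>K. p i x \<le> (\<Sum>i\<in>F. \<bar>B i\<bar>)" using B by force
  then show ?thesis by blast
qed

text \<open>A continuous functional is bounded on a neighbourhood
  \<open>{y. \<forall>i\<in>F. p i y < \<epsilon>}\<close> of \<open>0\<close>, and a precompact set fits into a multiple of it.\<close>
lemma dual_bounded_on_precompact:
  assumes e: "e \<in> dual smul A p" and K: "precompact_lcs A p K"
  shows "\<exists>B. \<forall>x\<in>K. norm (e x) \<le> B"
proof -
  have "openin (Etop A p) {x \<in> topspace (Etop A p). e x \<in> ball 0 1}"
    using e unfolding dual_def by (intro openin_continuous_map_preimage) auto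
  moreover have "0 \<in> {x \<in> topspace (Etop A p). e x \<in> ball 0 1}" using dual_zero[OF e] by simp
  ultimately obtain F \<epsilon> where F: "finite F" "F \<subseteq> A" "\<epsilon> > 0"
     "{y. \<forall>i\<in>F. p i (y - 0) < \<epsilon>} \<subseteq> {x. e x \<in> ball 0 1}"
    unfolding Etop_def openin_seminorm_topology by (auto simp del: diff_0_right)
  obtain B where B: "\<And>i x. i \<in> F \<Longrightarrow> x \<in> K \<Longrightarrow> p i x \<le> B"
    using precompact_bounded_finite_seminorms[OF K F(1,2)] by blast
  define t where "t = \<epsilon> / (2 * (\<bar>B\<bar> + 1))"
  have "t > 0" using F by (simp add: t_def add_pos_nonneg)
  have "norm (e x) \<le> 1 / t" if x: "x \<in> K" for x
  proof -
    have "p i (smul (of_real t) x) < \<epsilon>" if "i \<in> F" for i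
    proof -
      have "p i (smul (of_real t) x) = t * p i x" using F \<open>i \<in> F\<close> \<open>t > 0\<close> by (auto simp: seminorm_scale)
      also have "\<dots> \<le> t * (\<bar>B\<bar> + 1)" using B[OF \<open>i \<in> F\<close> x] \<open>t > 0\<close> by simp
      also have "\<dots> = \<epsilon> / 2"
        unfolding t_def using abs_ge_zero[of B] by (simp add: field_simps del: abs_ge_zero)
      also have "\<dots> < \<epsilon>" using F by simp
      finally show ?thesis .
    qed
    then have "norm (e (smul (of_real t) x)) < 1" using F(4) by auto
    then have "t * norm (e x) < 1" using dual_scale[OF e] \<open>t > 0\<close> by (simp add: norm_mult)
    then show ?thesis using \<open>t > 0\<close> by (simp add: field_simps)
  qed
  then show ?thesis by blast
qed

lemma relatively_compact_imp_precompact: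
  assumes "relatively_compact (Etop A p) B"
  shows "precompact_lcs A p B"
  unfolding precompact_lcs_def precompact_wrt_def
proof (intro ballI allI impI)
  fix \<alpha> and \<epsilon> :: real assume "\<alpha> \<in> A" "\<epsilon> > 0"
  let ?C = "Etop A p closure_of B"
  have "compactin (Etop A p) ?C" using assms unfolding relatively_compact_def .
  moreover have "\<forall>U\<in>(\<lambda>y. {x. p \<alpha> (x - y) < \<epsilon>}) ` ?C. openin (Etop A p) U"
    using \<open>\<alpha> \<in> A\<close> openin_Etop_ball by auto
  moreover have "?C \<subseteq> (\<Union>y\<in>?C. {x. p \<alpha> (x - y) < \<epsilon>})"
    using \<open>\<alpha> \<in> A\<close> \<open>\<epsilon> > 0\<close> seminorm_zero by auto
  ultimately obtain \<F> where \<F>: "finite \<F>" "\<F> \<subseteq> (\<lambda>y. {x. p \<alpha> (x - y) < \<epsilon>}) ` ?C" "?C \<subseteq> \<Union>\<F>"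
    unfolding compactin_def by meson
  obtain G where "finite G" "\<F> = (\<lambda>y. {x. p \<alpha> (x - y) < \<epsilon>}) ` G"
    using finite_subset_image[OF \<F>(1,2)] by blast
  moreover have "B \<subseteq> ?C" by (rule closure_of_subset) simp
  ultimately have "B \<subseteq> (\<Union>y\<in>G. {x. p \<alpha> (x - y) < \<epsilon>})" using \<F>(3) by simp
  then show "\<exists>F. finite F \<and> B \<subseteq> (\<Union>y\<in>F. {x. p \<alpha> (x - y) < \<epsilon>})" using \<open>finite G\<close> by blast
qed

text \<open>A bounded set lies in a multiple \<open>t\<close> of the \<open>p \<beta>\<close>-unit ball, which is covered by
  finitely many \<open>p \<alpha>\<close>-balls of radius \<open>\<epsilon> / t\<close>.\<close>
lemma Schwartz_bounded_imp_precompact: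
  assumes "Schwartz A p" "bounded_lcs A p B"
  shows "precompact_lcs A p B"
  unfolding precompact_lcs_def precompact_wrt_def
proof (intro ballI allI impI)
  fix \<alpha> and \<epsilon> :: real assume \<alpha>: "\<alpha> \<in> A" and "\<epsilon> > 0"
  obtain \<beta> where \<beta>: "\<beta> \<in> A" "precompact_wrt (p \<alpha>) {x. p \<beta> x < 1}"
    using assms(1) \<alpha> unfolding Schwartz_def by blast
  obtain R where R: "\<And>x. x \<in> B \<Longrightarrow> p \<beta> x \<le> R" using assms(2) \<beta> unfolding bounded_lcs_def by blast
  define t where "t = \<bar>R\<bar> + 1"
  have "t > 0" by (simp add: t_def)
  obtain F where F: "finite F" "{x. p \<beta> x < 1} \<subseteq> (\<Union>y\<in>F. {x. p \<alpha> (x - y) < \<epsilon> / t})"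
    using \<beta>(2) \<open>\<epsilon> > 0\<close> \<open>t > 0\<close> unfolding precompact_wrt_def by (meson divide_pos_pos)
  have "x \<in> (\<Union>y\<in>smul (of_real t) ` F. {x. p \<alpha> (x - y) < \<epsilon>})" if x: "x \<in> B" for x
  proof -
    have "p \<beta> (smul (of_real (1/t)) x) = p \<beta> x / t"
      using \<beta> \<open>t > 0\<close> by (simp add: seminorm_scale norm_divide)
    also have "\<dots> < 1" using R[OF x] \<open>t > 0\<close> by (simp add: t_def)
    finally obtain y where y: "y \<in> F" "p \<alpha> (smul (of_real (1/t)) x - y) < \<epsilon> / t" using F by blast
    have "smul (of_real t) (smul (of_real (1/t)) x - y) = x - smul (of_real t) y"
      using \<open>t > 0\<close>
      by (simp add: scale_right_diff_distrib scale_scale of_real_mult[symmetric] del: of_real_mult)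
    then have "p \<alpha> (x - smul (of_real t) y) = t * p \<alpha> (smul (of_real (1/t)) x - y)"
      using \<alpha> \<open>t > 0\<close> by (metis seminorm_scale norm_of_real abs_of_pos)
    also have "\<dots> < \<epsilon>" using y \<open>t > 0\<close> by (simp add: field_simps)
    finally show ?thesis using y by blast
  qed
  then show "\<exists>F. finite F \<and> B \<subseteq> (\<Union>y\<in>F. {x. p \<alpha> (x - y) < \<epsilon>})"
    using F by (intro exI[of _ "smul (of_real t) ` F"]) blast
qed

lemma bounded_imp_precompact:
  assumes "semi_Montel A p \<or> Schwartz A p" "bounded_lcs A p B"
  shows "precompact_lcs A p B"
  using assms relatively_compact_imp_precompact Schwartz_bounded_imp_precompact
  unfolding semi_Montel_def by blast

text \<open>Since \<open>p \<alpha> (smul c x0 - smul d x0) = norm (c - d) * p \<alpha> x0\<close>, a finite net of the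
  image of \<open>S\<close> pulls back to a finite net of \<open>S\<close>.\<close>
lemma totally_bounded_if_precompact_ray:
  assumes "\<alpha> \<in> A" "p \<alpha> x0 > 0" "precompact_wrt (p \<alpha>) ((\<lambda>c. smul c x0) ` S)" "\<epsilon> > 0"
  shows "\<exists>F. finite F \<and> S \<subseteq> (\<Union>c\<in>F. ball c \<epsilon>)"
proof -
  define \<delta> where "\<delta> = \<epsilon> * p \<alpha> x0 / 2"
  have "\<delta> > 0" using assms by (simp add: \<delta>_def)
  then obtain G where "finite G" and G: "(\<lambda>c. smul c x0) ` S \<subseteq> (\<Union>y\<in>G. {x. p \<alpha> (x - y) < \<delta>})"
    using assms(3) unfolding precompact_wrt_def by blast
  define G' where "G' = {y\<in>G. \<exists>c\<in>S. p \<alpha> (smul c x0 - y) < \<delta>}"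
  have "\<forall>y\<in>G'. \<exists>c. c \<in> S \<and> p \<alpha> (smul c x0 - y) < \<delta>" unfolding G'_def by blast
  from bchoice[OF this] obtain c where c: "\<And>y. y \<in> G' \<Longrightarrow> c y \<in> S \<and> p \<alpha> (smul (c y) x0 - y) < \<delta>"
    by blast
  have "d \<in> (\<Union>y\<in>G'. ball (c y) \<epsilon>)" if "d \<in> S" for d
  proof -
    obtain y where y: "y \<in> G" "p \<alpha> (smul d x0 - y) < \<delta>" using G \<open>d \<in> S\<close> by blast
    then have "y \<in> G'" using \<open>d \<in> S\<close> unfolding G'_def by blast
    have "norm (d - c y) * p \<alpha> x0 = p \<alpha> (smul d x0 - smul (c y) x0)"
      using assms(1) by (simp add: seminorm_scale_diff)
    also have "\<dots> \<le> p \<alpha> (smul d x0 - y) + p \<alpha> (smul (c y) x0 - y)"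
      using assms(1) seminorm_diff_triangle seminorm_diff_commute by metis
    also have "\<dots> < \<epsilon> * p \<alpha> x0" using y c[OF \<open>y \<in> G'\<close>] by (simp add: \<delta>_def)
    finally have "dist (c y) d < \<epsilon>" using assms(2) by (simp add: dist_norm norm_minus_commute)
    then show ?thesis using \<open>y \<in> G'\<close> by auto
  qed
  moreover have "finite G'" using \<open>finite G\<close> by (simp add: G'_def)
  ultimately show ?thesis by (intro exI[of _ "c ` G'"]) auto
qed

text \<open>The scalar field is only a real normed field; compactness of its balls, needed for
  Alaoglu--Bourbaki, comes from the bounded (hence precompact) ray through a vector \<open>x0 \<noteq> 0\<close>.\<close>
lemma compact_cball_scalars:
  assumes "\<exists>x::'e. x \<noteq> 0" "semi_Montel A p \<or> Schwartz A p"
  shows "compact (cball (0::'k) r)"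
proof (rule compact_cball_if_totally_bounded_balls)
  fix r and \<epsilon> :: real assume "\<epsilon> > 0"
  obtain x0 :: 'e and \<alpha> where "\<alpha> \<in> A" "p \<alpha> x0 \<noteq> 0"
    using assms(1) seminorms unfolding lcs_seminorms_def by blast
  then have "p \<alpha> x0 > 0" using seminorm_nonneg[of \<alpha> x0] by simp
  have "bounded_lcs A p ((\<lambda>c. smul c x0) ` cball 0 r)"
    unfolding bounded_lcs_def
  proof
    fix \<beta> assume "\<beta> \<in> A"
    then have "p \<beta> (smul c x0) \<le> \<bar>r\<bar> * p \<beta> x0" if "c \<in> cball 0 r" for c
      using that seminorm_nonneg[of \<beta> x0] by (auto simp: seminorm_scale intro!: mult_right_mono)
    then show "\<exists>C. \<forall>x\<in>(\<lambda>c. smul c x0) ` cball 0 r. p \<beta> x \<le> C" by blast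
  qed
  then have "precompact_wrt (p \<alpha>) ((\<lambda>c. smul c x0) ` cball 0 r)"
    using bounded_imp_precompact[OF assms(2)] \<open>\<alpha> \<in> A\<close> unfolding precompact_lcs_def by blast
  then show "\<exists>F. finite F \<and> cball (0::'k) r \<subseteq> (\<Union>c\<in>F. ball c \<epsilon>)"
    using totally_bounded_if_precompact_ray \<open>\<alpha> \<in> A\<close> \<open>p \<alpha> x0 > 0\<close> \<open>\<epsilon> > 0\<close> by blast
qed

lemma polar_ball_norm_le:
  assumes "e \<in> polar_ball smul A p \<alpha>" "\<alpha> \<in> A"
  shows "norm (e x) \<le> p \<alpha> x"
proof (rule ccontr)
  assume "\<not> norm (e x) \<le> p \<alpha> x"
  then have "p \<alpha> x < norm (e x)" by simp
  then obtain t where t: "p \<alpha> x < t" "t < norm (e x)" using dense by blast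
  then have "t > 0" using seminorm_nonneg[OF assms(2), of x] by simp
  have "p \<alpha> (smul (of_real (1/t)) x) = p \<alpha> x / t"
    using assms(2) \<open>t > 0\<close> by (simp add: seminorm_scale norm_divide)
  also have "\<dots> < 1" using t \<open>t > 0\<close> by simp
  finally have "norm (e (smul (of_real (1/t)) x)) \<le> 1" using assms(1) unfolding polar_ball_def by blast
  then have "norm (e x) / t \<le> 1"
    using assms(1) \<open>t > 0\<close> unfolding polar_ball_def by (simp add: dual_scale norm_mult norm_divide)
  then show False using t \<open>t > 0\<close> by (simp add: field_simps)
qed

lemma dominated_linear_in_dual:
  assumes add: "\<And>x y. e (x + y) = e x + e y" and scale: "\<And>c x. e (smul c x) = c * e x"
    and bound: "\<And>x. norm (e x) \<le> p \<alpha> x" and "\<alpha> \<in> A"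
  shows "e \<in> dual smul A p"
  unfolding dual_def
proof (intro CollectI conjI)
  show "Vector_Spaces.linear smul (*) e"
    using add scale module_mult_field module_axioms
    unfolding module_hom_iff_linear[symmetric] module_hom_iff by auto
  show "continuous_map (Etop A p) euclidean e"
    unfolding continuous_map_def
  proof (intro conjI allI impI)
    show "e \<in> topspace (Etop A p) \<rightarrow> topspace euclidean" by simp
    fix U :: "'k set" assume "openin euclidean U"
    show "openin (Etop A p) {x \<in> topspace (Etop A p). e x \<in> U}"
      unfolding openin_subopen[of _ "{x \<in> topspace (Etop A p). e x \<in> U}"]
    proof
      fix x assume "x \<in> {x \<in> topspace (Etop A p). e x \<in> U}"
      then obtain r where "r > 0" "ball (e x) r \<subseteq> U"
        using \<open>openin euclidean U\<close> open_contains_ball by force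
      moreover have "e y \<in> ball (e x) r" if "p \<alpha> (y - x) < r" for y
        using bound[of "y - x"] add[of "y - x" x] that by (simp add: dist_norm norm_minus_commute)
      ultimately have "{y. p \<alpha> (y - x) < r} \<subseteq> {x \<in> topspace (Etop A p). e x \<in> U}"
        by auto
      moreover have "x \<in> {y. p \<alpha> (y - x) < r}" using \<open>r > 0\<close> seminorm_zero[OF \<open>\<alpha> \<in> A\<close>] by simp
      ultimately show "\<exists>T. openin (Etop A p) T \<and> x \<in> T \<and> T \<subseteq> {x \<in> topspace (Etop A p). e x \<in> U}"
        using openin_Etop_ball[OF \<open>\<alpha> \<in> A\<close>] by blast
    qed
  qed
qed

lemma polar_ball_eq:
  assumes "\<alpha> \<in> A"
  shows "polar_ball smul A p \<alpha> = {e. (\<forall>x y. e (x + y) = e x + e y) \<and> (\<forall>c x. e (smul c x) = c * e x)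
    \<and> (\<forall>x. norm (e x) \<le> p \<alpha> x)}"
proof safe
  fix e assume e: "e \<in> polar_ball smul A p \<alpha>"
  then have "e \<in> dual smul A p" unfolding polar_ball_def by blast
  then show "e (x + y) = e x + e y" "e (smul c x) = c * e x" for x y c
    by (simp_all add: dual_add dual_scale)
  show "norm (e x) \<le> p \<alpha> x" for x using e assms by (rule polar_ball_norm_le)
next
  fix e assume e: "\<forall>x y. e (x + y) = e x + e y" "\<forall>c x. e (smul c x) = c * e x" "\<forall>x. norm (e x) \<le> p \<alpha> x"
  then have "e \<in> dual smul A p" using assms by (intro dominated_linear_in_dual) auto
  moreover have "norm (e x) \<le> 1" if "p \<alpha> x < 1" for x using e(3) that by (meson less_imp_le order_trans)
  ultimately show "e \<in> polar_ball smul A p \<alpha>" unfolding polar_ball_def by blast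
qed

lemma polar_ball_norm_diff_le:
  assumes "e \<in> polar_ball smul A p \<alpha>" "e0 \<in> polar_ball smul A p \<alpha>" "\<alpha> \<in> A"
    and "p \<alpha> (z - y) < \<delta>" "norm (e y - e0 y) < \<delta>"
  shows "norm (e z - e0 z) \<le> 3 * \<delta>"
proof -
  have dual: "e \<in> dual smul A p" "e0 \<in> dual smul A p" using assms(1,2) unfolding polar_ball_def by auto
  have "e z - e0 z = (e y - e0 y) + (e (z - y) - e0 (z - y))"
    using dual by (simp add: dual_diff)
  then have "norm (e z - e0 z) \<le> norm (e y - e0 y) + norm (e (z - y) - e0 (z - y))"
    by (simp only: norm_triangle_ineq)
  also have "\<dots> \<le> norm (e y - e0 y) + (norm (e (z - y)) + norm (e0 (z - y)))"
    using norm_triangle_ineq4 by (rule add_left_mono)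
  also have "\<dots> \<le> \<delta> + (p \<alpha> (z - y) + p \<alpha> (z - y))"
    using assms(5) polar_ball_norm_le[OF assms(1,3)] polar_ball_norm_le[OF assms(2,3)]
    by (intro add_mono) auto
  finally show ?thesis using assms(4) by simp
qed

text \<open>Alaoglu--Bourbaki: the polar is a closed subset of the compact box
  \<open>\<Pi>\<^sub>x cball 0 (p \<alpha> x)\<close> in the topology of pointwise convergence on \<open>'e \<Rightarrow> 'k\<close>.\<close>
lemma compact_polar_ball:
  assumes "\<And>r. compact (cball (0::'k) r)" "\<alpha> \<in> A"
  shows "compact (polar_ball smul A p \<alpha>)"
proof -
  have "compactin (product_topology (\<lambda>_. euclidean) UNIV) (PiE UNIV (\<lambda>x. cball (0::'k) (p \<alpha> x)))"
    using assms(1) by (simp add: compactin_PiE)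
  then have "compact (PiE UNIV (\<lambda>x. cball (0::'k) (p \<alpha> x)))"
    by (simp add: euclidean_product_topology)
  moreover have "closed ({e. \<forall>x y. e (x + y) = e x + e y} \<inter> {e. \<forall>c x. e (smul c x) = c * e x})"
    by (intro closed_Int closed_Collect_all closed_Collect_eq continuous_intros
        continuous_on_product_coordinates)
  ultimately have "compact (PiE UNIV (\<lambda>x. cball (0::'k) (p \<alpha> x))
      \<inter> ({e. \<forall>x y. e (x + y) = e x + e y} \<inter> {e. \<forall>c x. e (smul c x) = c * e x}))"
    by (rule compact_Int_closed)
  also have "\<dots> = polar_ball smul A p \<alpha>"
    unfolding polar_ball_eq[OF assms(2)] by (auto simp: PiE_UNIV_domain)
  finally show ?thesis .
qed

lemma norm_le_sup_norm_on:
  assumes "a \<in> dual smul A p" "b \<in> dual smul A p" "precompact_lcs A p K" "z \<in> K"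
  shows "norm (a z - b z) \<le> sup_norm_on K (a - b)"
proof -
  obtain Ba Bb where "\<forall>x\<in>K. norm (a x) \<le> Ba" "\<forall>x\<in>K. norm (b x) \<le> Bb"
    using dual_bounded_on_precompact assms(1-3) by metis
  then have "\<forall>x\<in>K. norm ((a - b) x) \<le> Ba + Bb"
    by (smt (verit) fun_diff_def norm_triangle_ineq4)
  then have "bdd_above ((\<lambda>x. norm ((a - b) x)) ` K)" by (auto intro: bdd_aboveI)
  then show ?thesis unfolding sup_norm_on_def using assms(4) by (simp add: cSup_upper)
qed

lemma sup_norm_on_triangle:
  assumes "K \<noteq> {}" "precompact_lcs A p K"
    and "a \<in> dual smul A p" "b \<in> dual smul A p" "c \<in> dual smul A p"
  shows "sup_norm_on K (a - c) \<le> sup_norm_on K (a - b) + sup_norm_on K (b - c)"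
  unfolding sup_norm_on_def[of K "a - c"]
proof (rule cSup_least)
  show "(\<lambda>x. norm ((a - c) x)) ` K \<noteq> {}" using assms(1) by simp
  fix y assume "y \<in> (\<lambda>x. norm ((a - c) x)) ` K"
  then obtain x where "x \<in> K" "y = norm (a x - c x)" by auto
  moreover have "norm (a x - c x) \<le> norm (a x - b x) + norm (b x - c x)"
    using norm_triangle_ineq[of "a x - b x" "b x - c x"] by simp
  ultimately show "y \<le> sup_norm_on K (a - b) + sup_norm_on K (b - c)"
    using norm_le_sup_norm_on[OF assms(3,4,2)] norm_le_sup_norm_on[OF assms(4,5,2)] by force
qed

lemma openin_gamma_top_ball:
  assumes "K \<noteq> {}" "precompact_lcs A p K" "e0 \<in> dual smul A p"
  shows "openin (gamma_top smul A p) {e \<in> dual smul A p. sup_norm_on K (e - e0) < r}"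
  unfolding gamma_top_eq
  by (rule openin_seminorm_ball) (use assms sup_norm_on_triangle in auto)

end

section \<open>Weighted function spaces\<close>

lemma wsup_le: "0 \<le> B \<Longrightarrow> (\<And>z. z \<in> S \<Longrightarrow> z \<le> B) \<Longrightarrow> wsup S \<le> B"
  unfolding wsup_def by (rule cSup_least) auto

locale FV_dom_space =
  fixes \<Omega> :: "'x set" and J :: "'j set" and L :: "'l set" and M :: "'l \<Rightarrow> 'm set"
    and \<nu> :: "'j \<Rightarrow> 'l \<Rightarrow> 'm \<Rightarrow> 'x \<Rightarrow> real" and M0 Mr :: "'m set" and \<omega> :: "'m \<Rightarrow> 'x set"
    and domT :: "'m \<Rightarrow> ('x \<Rightarrow> 'k::real_normed_field) set" and T :: "'m \<Rightarrow> ('x \<Rightarrow> 'k) \<Rightarrow> 'x \<Rightarrow> 'k"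
  assumes FV_data: "FV_data \<Omega> J L M \<nu> M0 Mr \<omega> domT T"
    and dom_space: "dom_space \<Omega> J L M \<nu> M0 Mr \<omega> domT T"
begin

abbreviation "Mall \<equiv> (\<Union>l\<in>L. M l) \<union> M0 \<union> Mr"
abbreviation "FV \<equiv> FVspace \<Omega> J L M \<nu> M0 Mr \<omega> domT T"
abbreviation "FV_top \<equiv> FVtop \<Omega> J L M \<nu> M0 Mr \<omega> domT T"
abbreviation "FV_sn \<equiv> FVsn \<Omega> M \<nu> T"

lemma weight_nonneg: "j \<in> J \<Longrightarrow> l \<in> L \<Longrightarrow> m \<in> M l \<Longrightarrow> x \<in> \<Omega> \<Longrightarrow> 0 \<le> \<nu> j l m x"
proof -
  have "\<forall>j\<in>J. \<forall>l\<in>L. \<forall>m\<in>M l. \<forall>x\<in>\<Omega>. \<nu> j l m x \<ge> 0"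
    using FV_data unfolding FV_data_def by (elim conjE) assumption
  then show "j \<in> J \<Longrightarrow> l \<in> L \<Longrightarrow> m \<in> M l \<Longrightarrow> x \<in> \<Omega> \<Longrightarrow> 0 \<le> \<nu> j l m x" by blast
qed

lemma
  assumes "m \<in> Mall" "g \<in> domT m"
  shows domT_vanishes: "x \<notin> \<Omega> \<Longrightarrow> g x = 0"
    and domT_add: "h \<in> domT m \<Longrightarrow>
      (\<lambda>x. g x + h x) \<in> domT m \<and> T m (\<lambda>x. g x + h x) = (\<lambda>x. T m g x + T m h x)"
    and domT_scale: "(\<lambda>x. c * g x) \<in> domT m \<and> T m (\<lambda>x. c * g x) = (\<lambda>x. c * T m g x)"
proof -
  have "\<forall>m\<in>Mall. domT m \<subseteq> {f. \<forall>x. x \<notin> \<Omega> \<longrightarrow> f x = 0} \<and> (\<lambda>x. 0) \<in> domT m \<and>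
        (\<forall>f\<in>domT m. \<forall>g\<in>domT m. (\<lambda>x. f x + g x) \<in> domT m \<and>
            T m (\<lambda>x. f x + g x) = (\<lambda>x. T m f x + T m g x)) \<and>
        (\<forall>f\<in>domT m. \<forall>c. (\<lambda>x. c * f x) \<in> domT m \<and> T m (\<lambda>x. c * f x) = (\<lambda>x. c * T m f x)) \<and>
        (\<forall>f\<in>domT m. \<forall>x. x \<notin> \<omega> m \<longrightarrow> T m f x = 0)"
    using FV_data unfolding FV_data_def by (elim conjE) assumption
  note dom_m = bspec[OF this assms(1)]
  show "x \<notin> \<Omega> \<Longrightarrow> g x = 0"
    and "h \<in> domT m \<Longrightarrow> (\<lambda>x. g x + h x) \<in> domT m \<and> T m (\<lambda>x. g x + h x) = (\<lambda>x. T m g x + T m h x)"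
    and "(\<lambda>x. c * g x) \<in> domT m \<and> T m (\<lambda>x. c * g x) = (\<lambda>x. c * T m g x)"
    using dom_m assms(2) by blast+
qed

lemma FVspace_iff: "g \<in> FV \<longleftrightarrow> (\<forall>m\<in>Mall. g \<in> domT m) \<and> (\<forall>m\<in>M0. \<forall>x\<in>\<omega> m. T m g x = 0) \<and>
     (\<forall>j\<in>J. \<forall>l\<in>L. bdd_above {norm (T m g x) * \<nu> j l m x | x m. x \<in> \<Omega> \<and> m \<in> M l})"
  unfolding FVspace_def by simp

lemma FVspace_vanishes: "g \<in> FV \<Longrightarrow> x \<notin> \<Omega> \<Longrightarrow> g x = 0"
proof -
  assume "g \<in> FV" "x \<notin> \<Omega>"
  have "L \<noteq> {} \<and> (\<forall>l\<in>L. M l \<noteq> {})"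
    using FV_data unfolding FV_data_def by (elim conjE) (rule conjI; assumption)
  then obtain l m where "l \<in> L" "m \<in> M l" by blast
  then show "g x = 0" using domT_vanishes \<open>g \<in> FV\<close> \<open>x \<notin> \<Omega>\<close> unfolding FVspace_iff by blast
qed

lemma bdd_above_dominated:
  fixes a b c :: "'m \<Rightarrow> 'x \<Rightarrow> real"
  assumes "bdd_above {a m x | x m. x \<in> \<Omega> \<and> m \<in> M l}" "bdd_above {b m x | x m. x \<in> \<Omega> \<and> m \<in> M l}"
    and "\<And>x m. x \<in> \<Omega> \<Longrightarrow> m \<in> M l \<Longrightarrow> c m x \<le> s * a m x + t * b m x" "s \<ge> 0" "t \<ge> 0"
  shows "bdd_above {c m x | x m. x \<in> \<Omega> \<and> m \<in> M l}"
proof -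
  obtain Ba where Ba: "\<And>x m. x \<in> \<Omega> \<Longrightarrow> m \<in> M l \<Longrightarrow> a m x \<le> Ba"
    using assms(1) unfolding bdd_above_def by blast
  obtain Bb where Bb: "\<And>x m. x \<in> \<Omega> \<Longrightarrow> m \<in> M l \<Longrightarrow> b m x \<le> Bb"
    using assms(2) unfolding bdd_above_def by blast
  have "c m x \<le> s * Ba + t * Bb" if "x \<in> \<Omega>" "m \<in> M l" for x m
    using assms(3)[OF that] mult_left_mono[OF Ba[OF that] assms(4)] mult_left_mono[OF Bb[OF that] assms(5)]
    by linarith
  then show ?thesis unfolding bdd_above_def by blast
qed

lemma
  assumes "g \<in> FV" "h \<in> FV"
  shows FVspace_add: "(\<lambda>x. g x + h x) \<in> FV"
    and T_add: "m \<in> Mall \<Longrightarrow> T m (\<lambda>x. g x + h x) = (\<lambda>x. T m g x + T m h x)"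
proof -
  have T: "T m (\<lambda>x. g x + h x) = (\<lambda>x. T m g x + T m h x)" if "m \<in> Mall" for m
    using domT_add[OF that] assms that unfolding FVspace_iff by blast
  then show "m \<in> Mall \<Longrightarrow> T m (\<lambda>x. g x + h x) = (\<lambda>x. T m g x + T m h x)" .
  show "(\<lambda>x. g x + h x) \<in> FV"
    unfolding FVspace_iff
  proof (intro conjI ballI)
    show "(\<lambda>x. g x + h x) \<in> domT m" if "m \<in> Mall" for m
      using domT_add[OF that] assms that unfolding FVspace_iff by blast
    show "T m (\<lambda>x. g x + h x) x = 0" if "m \<in> M0" "x \<in> \<omega> m" for m x
      using that assms T[of m] unfolding FVspace_iff by auto
    fix j l assume "j \<in> J" "l \<in> L"
    show "bdd_above {norm (T m (\<lambda>x. g x + h x) x) * \<nu> j l m x | x m. x \<in> \<Omega> \<and> m \<in> M l}"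
    proof (rule bdd_above_dominated[where a = "\<lambda>m x. norm (T m g x) * \<nu> j l m x"
          and b = "\<lambda>m x. norm (T m h x) * \<nu> j l m x" and s = 1 and t = 1])
      fix x m assume "x \<in> \<Omega>" "m \<in> M l"
      then have "norm (T m (\<lambda>x. g x + h x) x) \<le> norm (T m g x) + norm (T m h x)"
        using T[of m] \<open>l \<in> L\<close> norm_triangle_ineq by fastforce
      then show "norm (T m (\<lambda>x. g x + h x) x) * \<nu> j l m x
          \<le> 1 * (norm (T m g x) * \<nu> j l m x) + 1 * (norm (T m h x) * \<nu> j l m x)"
        using weight_nonneg[OF \<open>j \<in> J\<close> \<open>l \<in> L\<close> \<open>m \<in> M l\<close> \<open>x \<in> \<Omega>\<close>]
        by (simp add: mult_right_mono distrib_right[symmetric])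
    qed (use assms \<open>j \<in> J\<close> \<open>l \<in> L\<close> in \<open>auto simp: FVspace_iff\<close>)
  qed
qed

lemma
  assumes "g \<in> FV"
  shows FVspace_scale: "(\<lambda>x. c * g x) \<in> FV"
    and T_scale: "m \<in> Mall \<Longrightarrow> T m (\<lambda>x. c * g x) = (\<lambda>x. c * T m g x)"
proof -
  have T: "T m (\<lambda>x. c * g x) = (\<lambda>x. c * T m g x)" if "m \<in> Mall" for m
    using domT_scale[OF that] assms that unfolding FVspace_iff by blast
  then show "m \<in> Mall \<Longrightarrow> T m (\<lambda>x. c * g x) = (\<lambda>x. c * T m g x)" .
  show "(\<lambda>x. c * g x) \<in> FV"
    unfolding FVspace_iff
  proof (intro conjI ballI)
    show "(\<lambda>x. c * g x) \<in> domT m" if "m \<in> Mall" for m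
      using domT_scale[OF that] assms that unfolding FVspace_iff by blast
    show "T m (\<lambda>x. c * g x) x = 0" if "m \<in> M0" "x \<in> \<omega> m" for m x
      using that assms T[of m] unfolding FVspace_iff by auto
    fix j l assume "j \<in> J" "l \<in> L"
    show "bdd_above {norm (T m (\<lambda>x. c * g x) x) * \<nu> j l m x | x m. x \<in> \<Omega> \<and> m \<in> M l}"
    proof (rule bdd_above_dominated[where a = "\<lambda>m x. norm (T m g x) * \<nu> j l m x"
          and b = "\<lambda>m x. norm (T m g x) * \<nu> j l m x" and s = "norm c" and t = 0])
      fix x m assume "x \<in> \<Omega>" "m \<in> M l"
      then have "m \<in> Mall" using \<open>l \<in> L\<close> by blast
      then show "norm (T m (\<lambda>x. c * g x) x) * \<nu> j l m x
          \<le> norm c * (norm (T m g x) * \<nu> j l m x) + 0 * (norm (T m g x) * \<nu> j l m x)"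
        using T[of m] by (simp add: norm_mult)
    qed (use assms \<open>j \<in> J\<close> \<open>l \<in> L\<close> in \<open>auto simp: FVspace_iff\<close>)
  qed
qed

lemma
  assumes "g \<in> FV" "h \<in> FV"
  shows FVspace_diff: "g - h \<in> FV"
    and T_diff: "m \<in> Mall \<Longrightarrow> T m (g - h) = (\<lambda>x. T m g x - T m h x)"
proof -
  have eq: "g - h = (\<lambda>x. g x + (-1) * h x)" by auto
  show "g - h \<in> FV" unfolding eq using assms by (intro FVspace_add FVspace_scale)
  assume "m \<in> Mall"
  then have "T m (g - h) = (\<lambda>x. T m g x + T m (\<lambda>x. (-1) * h x) x)"
    unfolding eq using T_add[OF assms(1) FVspace_scale[OF assms(2)]] by blast
  then show "T m (g - h) = (\<lambda>x. T m g x - T m h x)"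
    using T_scale[OF assms(2) \<open>m \<in> Mall\<close>, of "-1"] by simp
qed

lemma topspace_FV_top [simp]: "topspace FV_top = FV"
  unfolding FVtop_def by simp

text \<open>Elements of \<open>FV\<close> vanish off \<open>\<Omega>\<close>, so distinct ones are told apart by a continuous
  point evaluation.\<close>
lemma Hausdorff_space_FV_top: "Hausdorff_space FV_top"
  unfolding Hausdorff_space_def
proof (intro allI impI)
  fix g h assume "g \<in> topspace FV_top \<and> h \<in> topspace FV_top \<and> g \<noteq> h"
  then obtain x where "g x \<noteq> h x" "g \<in> FV" "h \<in> FV" by auto
  then have "x \<in> \<Omega>" using FVspace_vanishes[of g x] FVspace_vanishes[of h x] by fastforce
  then have eval: "continuous_map FV_top euclidean (\<lambda>f. f x)"
    using dom_space unfolding dom_space_def by blast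
  obtain U W where "open U" "open W" "g x \<in> U" "h x \<in> W" "U \<inter> W = {}"
    using separation_t2[THEN iffD1, OF \<open>g x \<noteq> h x\<close>] by blast
  then show "\<exists>U W. openin FV_top U \<and> openin FV_top W \<and> g \<in> U \<and> h \<in> W \<and> disjnt U W"
    using \<open>g \<in> FV\<close> \<open>h \<in> FV\<close>
    by (intro exI[of _ "{f \<in> FV. f x \<in> U}"] exI[of _ "{f \<in> FV. f x \<in> W}"])
      (auto simp: disjnt_def intro!: openin_continuous_map_preimage[OF eval, simplified])
qed

lemma FV_eq_if_FVsn_vanish:
  assumes "g \<in> FV" "h \<in> FV" "\<And>j l. j \<in> J \<Longrightarrow> l \<in> L \<Longrightarrow> FV_sn j l (g - h) \<le> 0"
  shows "g = h"
  using eq_if_seminorms_vanish[of "J \<times> L" "\<lambda>(j, l). FV_sn j l" FV g h] assms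
    Hausdorff_imp_t1_space[OF Hausdorff_space_FV_top]
  unfolding FVtop_def by auto

end

section \<open>The map \<open>R_f\<close>\<close>

locale FV_lb_function = lc_space smul A p + FV_dom_space \<Omega> J L M \<nu> M0 Mr \<omega> domT T
  for smul :: "'k::real_normed_field \<Rightarrow> 'e::ab_group_add \<Rightarrow> 'e" and A :: "'a set" and p
    and \<Omega> :: "'x set" and J :: "'j set" and L :: "'l set" and M :: "'l \<Rightarrow> 'm set"
    and \<nu> M0 Mr \<omega> and domT :: "'m \<Rightarrow> ('x \<Rightarrow> 'k) set" and T +
  fixes U :: "('m \<times> 'x) set" and f :: "'m \<times> 'x \<Rightarrow> 'e"
  assumes fixes_topology: "fixes_topology \<Omega> J L M \<nu> M0 Mr \<omega> domT T U"
    and f_lb: "f \<in> FVE_lb smul A p \<Omega> J L M \<nu> M0 Mr \<omega> domT T U"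
begin

abbreviation "R \<equiv> Rmap \<Omega> J L M \<nu> M0 Mr \<omega> domT T U f"

definition N_U :: "'j \<Rightarrow> 'l \<Rightarrow> 'e set" where
  "N_U i k = {smul (of_real (\<nu> i k m x)) (f (m, x)) | x m. x \<in> \<Omega> \<and> m \<in> M k \<and> (m, x) \<in> U}"

lemma U_Mall: "(m, x) \<in> U \<Longrightarrow> m \<in> Mall"
  using fixes_topology unfolding fixes_topology_def by blast

lemma FVsn_le_wsup_U:
  "\<forall>j\<in>J. \<forall>l\<in>L. \<exists>i\<in>J. \<exists>k\<in>L. \<exists>C>0. \<forall>g\<in>FV.
     FV_sn j l g \<le> C * wsup {norm (T m g x) * \<nu> i k m x | x m. x \<in> \<Omega> \<and> m \<in> M k \<and> (m, x) \<in> U}"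
  using fixes_topology unfolding fixes_topology_def by (elim conjE) assumption

lemma FV_eq_if_eq_on_U:
  assumes "g \<in> FV" "h \<in> FV" "\<And>m x. (m, x) \<in> U \<Longrightarrow> T m g x = T m h x"
  shows "g = h"
proof (rule FV_eq_if_FVsn_vanish[OF assms(1,2)])
  fix j l assume "j \<in> J" "l \<in> L"
  then obtain i k C where "i \<in> J" "k \<in> L" "C > 0" and bound: "\<And>g. g \<in> FV \<Longrightarrow>
       FV_sn j l g \<le> C * wsup {norm (T m g x) * \<nu> i k m x | x m. x \<in> \<Omega> \<and> m \<in> M k \<and> (m, x) \<in> U}"
    using FVsn_le_wsup_U by blast
  have "T m (g - h) x = 0" if "(m, x) \<in> U" for m x
    using T_diff[OF assms(1,2) U_Mall[OF that]] assms(3)[OF that] by simp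
  then have "wsup {norm (T m (g - h) x) * \<nu> i k m x | x m. x \<in> \<Omega> \<and> m \<in> M k \<and> (m, x) \<in> U} \<le> 0"
    by (intro wsup_le) auto
  then show "FV_sn j l (g - h) \<le> 0"
    using bound[OF FVspace_diff[OF assms(1,2)]] \<open>C > 0\<close> by (smt (verit) mult_le_0_iff)
qed

lemma Rmap_eqI:
  assumes "g \<in> FV" "\<forall>(m, x)\<in>U. T m g x = e (f (m, x))"
  shows "R e = g"
  unfolding Rmap_def
proof (rule the_equality)
  fix h assume h: "h \<in> FV \<and> (\<forall>(m, x)\<in>U. T m h x = e (f (m, x)))"
  show "h = g"
  proof (rule FV_eq_if_eq_on_U)
    fix m x assume "(m, x) \<in> U"
    then show "T m h x = T m g x" using h assms(2) by fastforce
  qed (use h assms(1) in blast)+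
qed (use assms in blast)

lemma Rmap_spec:
  assumes "e \<in> dual smul A p"
  shows "R e \<in> FV" "\<forall>(m, x)\<in>U. T m (R e) x = e (f (m, x))"
proof -
  obtain g where "g \<in> FV" "\<forall>(m, x)\<in>U. T m g x = e (f (m, x))"
    using f_lb assms unfolding FVE_lb_def by blast
  moreover from this have "R e = g" by (rule Rmap_eqI)
  ultimately show "R e \<in> FV" "\<forall>(m, x)\<in>U. T m (R e) x = e (f (m, x))" by simp_all
qed

lemma Rmap_add:
  assumes "e1 \<in> dual smul A p" "e2 \<in> dual smul A p"
  shows "R (\<lambda>x. e1 x + e2 x) = (\<lambda>y. R e1 y + R e2 y)"
proof (rule Rmap_eqI)
  show "(\<lambda>y. R e1 y + R e2 y) \<in> FV" using Rmap_spec assms by (simp add: FVspace_add)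
  show "\<forall>(m, x)\<in>U. T m (\<lambda>y. R e1 y + R e2 y) x = e1 (f (m, x)) + e2 (f (m, x))"
    using T_add[OF Rmap_spec(1)[OF assms(1)] Rmap_spec(1)[OF assms(2)] U_Mall]
      Rmap_spec(2)[OF assms(1)] Rmap_spec(2)[OF assms(2)] by fastforce
qed

lemma Rmap_scale:
  assumes "e \<in> dual smul A p"
  shows "R (\<lambda>x. c * e x) = (\<lambda>y. c * R e y)"
proof (rule Rmap_eqI)
  show "(\<lambda>y. c * R e y) \<in> FV" using Rmap_spec assms by (simp add: FVspace_scale)
  show "\<forall>(m, x)\<in>U. T m (\<lambda>y. c * R e y) x = c * e (f (m, x))"
    using T_scale[OF Rmap_spec(1)[OF assms] U_Mall] Rmap_spec(2)[OF assms] by fastforce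
qed

lemma bounded_N_U: "i \<in> J \<Longrightarrow> k \<in> L \<Longrightarrow> bounded_lcs A p (N_U i k)"
  using f_lb unfolding FVE_lb_def N_U_def by blast

text \<open>On \<open>U\<close>, \<open>\<nu> i k m x * T m (R e) x = e (\<nu> i k m x f (m, x))\<close>: the weighted values
  of \<open>R e\<close> are the values of \<open>e\<close> on \<open>N_U i k\<close>.\<close>
lemma wsup_U_Rmap_diff_le:
  assumes "e \<in> dual smul A p" "e0 \<in> dual smul A p" "i \<in> J" "k \<in> L"
    and "0 \<le> B" "\<And>z. z \<in> N_U i k \<Longrightarrow> norm (e z - e0 z) \<le> B"
  shows "wsup {norm (T m (R e - R e0) x) * \<nu> i k m x | x m. x \<in> \<Omega> \<and> m \<in> M k \<and> (m, x) \<in> U} \<le> B"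
proof (rule wsup_le[OF assms(5)])
  fix z assume "z \<in> {norm (T m (R e - R e0) x) * \<nu> i k m x | x m. x \<in> \<Omega> \<and> m \<in> M k \<and> (m, x) \<in> U}"
  then obtain x m where z: "z = norm (T m (R e - R e0) x) * \<nu> i k m x" "x \<in> \<Omega>" "m \<in> M k" "(m, x) \<in> U"
    by blast
  let ?w = "smul (of_real (\<nu> i k m x)) (f (m, x))"
  have "T m (R e - R e0) x = e (f (m, x)) - e0 (f (m, x))"
    using T_diff[OF Rmap_spec(1)[OF assms(1)] Rmap_spec(1)[OF assms(2)] U_Mall[OF z(4)]]
      bspec[OF Rmap_spec(2)[OF assms(1)] z(4)] bspec[OF Rmap_spec(2)[OF assms(2)] z(4)] by simp
  then have "z = norm (of_real (\<nu> i k m x) * (e (f (m, x)) - e0 (f (m, x))))"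
    using z(1) weight_nonneg[OF assms(3,4) z(3,2)] by (simp add: norm_mult)
  also have "\<dots> = norm (e ?w - e0 ?w)"
    using dual_scale[OF assms(1)] dual_scale[OF assms(2)] by (simp add: algebra_simps)
  also have "\<dots> \<le> B" using assms(6) z unfolding N_U_def by blast
  finally show "z \<le> B" .
qed

lemma Rmap_diff_estimate:
  assumes "j \<in> J" "l \<in> L"
  obtains K C where "K \<noteq> {}" "bounded_lcs A p K" "C > 0"
    "\<And>e e0 B. e \<in> dual smul A p \<Longrightarrow> e0 \<in> dual smul A p \<Longrightarrow> 0 \<le> B \<Longrightarrow>
       (\<And>z. z \<in> K \<Longrightarrow> norm (e z - e0 z) \<le> B) \<Longrightarrow> FV_sn j l (R e - R e0) \<le> C * B"
proof -
  obtain i k C where ikC: "i \<in> J" "k \<in> L" "C > 0" and bound: "\<And>g. g \<in> FV \<Longrightarrow>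
       FV_sn j l g \<le> C * wsup {norm (T m g x) * \<nu> i k m x | x m. x \<in> \<Omega> \<and> m \<in> M k \<and> (m, x) \<in> U}"
    using FVsn_le_wsup_U assms by blast
  have bdd: "bounded_lcs A p (insert 0 (N_U i k))"
    unfolding bounded_lcs_def
  proof
    fix \<alpha> assume "\<alpha> \<in> A"
    then obtain B where "\<forall>x\<in>N_U i k. p \<alpha> x \<le> B"
      using bounded_N_U[OF ikC(1,2)] unfolding bounded_lcs_def by blast
    then have "\<forall>x\<in>insert 0 (N_U i k). p \<alpha> x \<le> max B 0" using seminorm_zero[OF \<open>\<alpha> \<in> A\<close>] by auto
    then show "\<exists>B. \<forall>x\<in>insert 0 (N_U i k). p \<alpha> x \<le> B" by blast
  qed
  have est: "FV_sn j l (R e - R e0) \<le> C * B"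
    if "e \<in> dual smul A p" "e0 \<in> dual smul A p" "0 \<le> B" "\<And>z. z \<in> insert 0 (N_U i k) \<Longrightarrow> norm (e z - e0 z) \<le> B"
    for e e0 B
  proof -
    have "wsup {norm (T m (R e - R e0) x) * \<nu> i k m x | x m. x \<in> \<Omega> \<and> m \<in> M k \<and> (m, x) \<in> U} \<le> B"
      using that(4) by (intro wsup_U_Rmap_diff_le[OF that(1,2) ikC(1,2) that(3)]) simp
    then show ?thesis
      using bound[OF FVspace_diff[OF Rmap_spec(1)[OF that(1)] Rmap_spec(1)[OF that(2)]]] ikC(3)
      by (smt (verit) mult_left_mono)
  qed
  show ?thesis by (rule that[OF insert_not_empty bdd ikC(3) est])
qed

lemma continuous_map_Rmap_gamma:
  assumes "semi_Montel A p \<or> Schwartz A p"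
  shows "continuous_map (gamma_top smul A p) FV_top R"
  unfolding FVtop_def
proof (rule continuous_map_into_seminorm_topology)
  show "R ` topspace (gamma_top smul A p) \<subseteq> FV" using Rmap_spec by (auto simp: gamma_top_eq)
  fix e0 i and \<epsilon> :: real
  assume "e0 \<in> topspace (gamma_top smul A p)" "i \<in> J \<times> L" "\<epsilon> > 0"
  then obtain j l where "i = (j, l)" "j \<in> J" "l \<in> L" and e0: "e0 \<in> dual smul A p"
    by (auto simp: gamma_top_eq)
  obtain K C where K: "K \<noteq> {}" "bounded_lcs A p K" and "C > 0" and estimate:
    "\<And>e e0 B. e \<in> dual smul A p \<Longrightarrow> e0 \<in> dual smul A p \<Longrightarrow> 0 \<le> B \<Longrightarrow>
       (\<And>z. z \<in> K \<Longrightarrow> norm (e z - e0 z) \<le> B) \<Longrightarrow> FV_sn j l (R e - R e0) \<le> C * B"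
    using Rmap_diff_estimate[OF \<open>j \<in> J\<close> \<open>l \<in> L\<close>] by blast
  have "precompact_lcs A p K" using bounded_imp_precompact[OF assms K(2)] .
  define W where "W = {e \<in> dual smul A p. sup_norm_on K (e - e0) < \<epsilon> / C}"
  have "openin (gamma_top smul A p) W"
    unfolding W_def using openin_gamma_top_ball[OF K(1) \<open>precompact_lcs A p K\<close> e0] .
  moreover have "e0 \<in> W"
    using e0 K(1) \<open>\<epsilon> > 0\<close> \<open>C > 0\<close> by (simp add: W_def sup_norm_on_def image_constant_conv)
  moreover have "FV_sn j l (R e - R e0) < \<epsilon>" if "e \<in> W" for e
  proof -
    have e: "e \<in> dual smul A p" "sup_norm_on K (e - e0) < \<epsilon> / C" using that by (auto simp: W_def)
    have bound: "norm (e z - e0 z) \<le> sup_norm_on K (e - e0)" if "z \<in> K" for z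
      using norm_le_sup_norm_on[OF e(1) e0 \<open>precompact_lcs A p K\<close> that] .
    then have "0 \<le> sup_norm_on K (e - e0)" using K(1) by (meson ex_in_conv norm_ge_zero order_trans)
    then have "FV_sn j l (R e - R e0) \<le> C * sup_norm_on K (e - e0)"
      using estimate[OF e(1) e0] bound by blast
    also have "\<dots> < \<epsilon>" using e(2) \<open>C > 0\<close> by (simp add: field_simps)
    finally show ?thesis .
  qed
  ultimately show "\<exists>W. openin (gamma_top smul A p) W \<and> e0 \<in> W \<and>
      (\<forall>e\<in>W. (\<lambda>(j, l). FV_sn j l) i (R e - R e0) < \<epsilon>)"
    using \<open>i = (j, l)\<close> by auto
qed

text \<open>On the equicontinuous set \<open>polar_ball smul A p \<alpha>\<close>, pointwise convergence on a finite
  net of \<open>K\<close> already gives uniform convergence on the precompact set \<open>K\<close>.\<close>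
lemma continuous_map_Rmap_polar_ball:
  assumes "semi_Montel A p \<or> Schwartz A p" "\<alpha> \<in> A"
  shows "continuous_map (top_of_set (polar_ball smul A p \<alpha>)) FV_top R"
  unfolding FVtop_def
proof (rule continuous_map_into_seminorm_topology)
  let ?B = "polar_ball smul A p \<alpha>"
  have B_dual: "?B \<subseteq> dual smul A p" unfolding polar_ball_def by blast
  then show "R ` topspace (top_of_set ?B) \<subseteq> FV" using Rmap_spec by auto
  fix e0 i and \<epsilon> :: real
  assume "e0 \<in> topspace (top_of_set ?B)" "i \<in> J \<times> L" "\<epsilon> > 0"
  then obtain j l where "i = (j, l)" "j \<in> J" "l \<in> L" and "e0 \<in> ?B" by auto
  then have e0: "e0 \<in> dual smul A p" using B_dual by blast
  obtain K C where "K \<noteq> {}" and K: "bounded_lcs A p K" and "C > 0" and estimate: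
    "\<And>e e0 B. e \<in> dual smul A p \<Longrightarrow> e0 \<in> dual smul A p \<Longrightarrow> 0 \<le> B \<Longrightarrow>
       (\<And>z. z \<in> K \<Longrightarrow> norm (e z - e0 z) \<le> B) \<Longrightarrow> FV_sn j l (R e - R e0) \<le> C * B"
    using Rmap_diff_estimate[OF \<open>j \<in> J\<close> \<open>l \<in> L\<close>] by blast
  define \<delta> where "\<delta> = \<epsilon> / (4 * C)"
  have "\<delta> > 0" unfolding \<delta>_def using \<open>\<epsilon> > 0\<close> \<open>C > 0\<close> by simp
  then obtain F where "finite F" and F: "K \<subseteq> (\<Union>y\<in>F. {x. p \<alpha> (x - y) < \<delta>})"
    using bounded_imp_precompact[OF assms(1) K] assms(2)
    unfolding precompact_lcs_def precompact_wrt_def by blast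
  define W where "W = ?B \<inter> {e. \<forall>y\<in>F. e y \<in> ball (e0 y) \<delta>}"
  have "openin (top_of_set ?B) W"
    unfolding W_def using product_topology_basis'[OF \<open>finite F\<close>, of "\<lambda>y. ball (e0 y) \<delta>" id] by auto
  moreover have "e0 \<in> W" using \<open>e0 \<in> ?B\<close> \<open>\<delta> > 0\<close> by (simp add: W_def)
  moreover have "FV_sn j l (R e - R e0) < \<epsilon>" if "e \<in> W" for e
  proof -
    have "norm (e z - e0 z) \<le> 3 * \<delta>" if "z \<in> K" for z
    proof -
      obtain y where "y \<in> F" "p \<alpha> (z - y) < \<delta>" using F \<open>z \<in> K\<close> by blast
      moreover from \<open>y \<in> F\<close> have "norm (e y - e0 y) < \<delta>"
        using \<open>e \<in> W\<close> by (auto simp: W_def dist_norm norm_minus_commute)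
      ultimately show ?thesis
        using \<open>e \<in> W\<close> \<open>e0 \<in> ?B\<close> assms(2) polar_ball_norm_diff_le unfolding W_def by blast
    qed
    then have "FV_sn j l (R e - R e0) \<le> C * (3 * \<delta>)"
      using estimate[of e e0 "3 * \<delta>"] e0 \<open>e \<in> W\<close> B_dual \<open>\<delta> > 0\<close> unfolding W_def by auto
    also have "\<dots> < \<epsilon>" unfolding \<delta>_def using \<open>C > 0\<close> \<open>\<epsilon> > 0\<close> by simp
    finally show ?thesis .
  qed
  ultimately show "\<exists>W. openin (top_of_set ?B) W \<and> e0 \<in> W \<and>
      (\<forall>e\<in>W. (\<lambda>(j, l). FV_sn j l) i (R e - R e0) < \<epsilon>)"
    using \<open>i = (j, l)\<close> by auto
qed

lemma relatively_compact_Rmap_polar_ball: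
  assumes "\<exists>x::'e. x \<noteq> 0" "semi_Montel A p \<or> Schwartz A p" "\<alpha> \<in> A"
  shows "relatively_compact FV_top (R ` polar_ball smul A p \<alpha>)"
proof -
  have "compact (polar_ball smul A p \<alpha>)"
    using compact_polar_ball compact_cball_scalars[OF assms(1,2)] assms(3) by blast
  then have "compactin FV_top (R ` polar_ball smul A p \<alpha>)"
    using image_compactin continuous_map_Rmap_polar_ball[OF assms(2,3)]
    by (metis compactin_euclidean_iff compactin_subtopology order_refl)
  moreover from this have "FV_top closure_of (R ` polar_ball smul A p \<alpha>) = R ` polar_ball smul A p \<alpha>"
    by (intro closure_of_closedin compactin_imp_closedin Hausdorff_space_FV_top)
  ultimately show ?thesis unfolding relatively_compact_def by simp
qed

end

theorem proposition4p4:
  fixes smul :: "'k::real_normed_field \<Rightarrow> 'e::ab_group_add \<Rightarrow> 'e"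
    and A :: "'a set" and p :: "'a \<Rightarrow> 'e \<Rightarrow> real"
    and \<Omega> :: "'x set" and J :: "'j set" and L :: "'l set" and M :: "'l \<Rightarrow> 'm set"
    and \<nu> :: "'j \<Rightarrow> 'l \<Rightarrow> 'm \<Rightarrow> 'x \<Rightarrow> real" and M0 Mr :: "'m set" and \<omega> :: "'m \<Rightarrow> 'x set"
    and domT :: "'m \<Rightarrow> ('x \<Rightarrow> 'k) set" and T :: "'m \<Rightarrow> ('x \<Rightarrow> 'k) \<Rightarrow> 'x \<Rightarrow> 'k"
    and U :: "('m \<times> 'x) set" and f :: "'m \<times> 'x \<Rightarrow> 'e"
  assumes "vector_space smul"
    and "\<exists>x::'e. x \<noteq> 0"
    and "lcs_seminorms smul A p"
    and "semi_Montel A p \<or> Schwartz A p"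
    and "FV_data \<Omega> J L M \<nu> M0 Mr \<omega> domT T"
    and "dom_space \<Omega> J L M \<nu> M0 Mr \<omega> domT T"
    and "fixes_topology \<Omega> J L M \<nu> M0 Mr \<omega> domT T U"
    and "f \<in> FVE_lb smul A p \<Omega> J L M \<nu> M0 Mr \<omega> domT T U"
  shows "(\<forall>e1\<in>dual smul A p. \<forall>e2\<in>dual smul A p.
            Rmap \<Omega> J L M \<nu> M0 Mr \<omega> domT T U f (\<lambda>x. e1 x + e2 x)
            = (\<lambda>y. Rmap \<Omega> J L M \<nu> M0 Mr \<omega> domT T U f e1 y + Rmap \<Omega> J L M \<nu> M0 Mr \<omega> domT T U f e2 y))
       \<and> (\<forall>c. \<forall>e\<in>dual smul A p.
            Rmap \<Omega> J L M \<nu> M0 Mr \<omega> domT T U f (\<lambda>x. c * e x)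
            = (\<lambda>y. c * Rmap \<Omega> J L M \<nu> M0 Mr \<omega> domT T U f e y))
       \<and> continuous_map (gamma_top smul A p) (FVtop \<Omega> J L M \<nu> M0 Mr \<omega> domT T)
            (Rmap \<Omega> J L M \<nu> M0 Mr \<omega> domT T U f)
       \<and> (\<forall>\<alpha>\<in>A. relatively_compact (FVtop \<Omega> J L M \<nu> M0 Mr \<omega> domT T)
            (Rmap \<Omega> J L M \<nu> M0 Mr \<omega> domT T U f ` polar_ball smul A p \<alpha>))"
proof -
  interpret FV_lb_function smul A p \<Omega> J L M \<nu> M0 Mr \<omega> domT T U f
    unfolding FV_lb_function_def FV_lb_function_axioms_def lc_space_def lc_space_axioms_def
      FV_dom_space_def
    using assms by blast
  show ?thesis
    using Rmap_add Rmap_scale continuous_map_Rmap_gamma[OF assms(4)]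
      relatively_compact_Rmap_polar_ball[OF assms(2,4)] by blast
qed

end
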